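(* Let $\alpha>1$, $\beta>0$, $x\in\mathbb{Z}$ and $C>0$. Almost surely on the event $\{R'=\{x,x+1,x+2,x+3\}\}$, there exist infinitely many times $k$ such that one of the following holds: (a) $X_k=x+1$, $\Delta_k(x+1)\le-C$ and $\Delta_k(x+1)+\Delta_k(x+2)\le-C$; (b) $X_k=x+2$, $\Delta_k(x+2)\ge C$ and $\Delta_k(x+1)+\Delta_k(x+2)\ge C$.
   Context: Let $\alpha\in\mathbb{R}$ and $\beta>0$. Let $(X_k)_{k\ge0}$ be the nearest-neighbour random walk on $\mathbb{Z}$ with $X_0=0$ defined as follows. For $k\ge0$ and $j\in\mathbb{Z}$, let $l_k(j):=\#\{m\in\{1,\dots,k\}:\{X_{m-1},X_m\}=\{j-1,j\}\}$, let $\mathcal{F}_k=\sigma(X_0,\dots,X_k)$, and let $\Delta_k(j):=-\alpha l_k(j-1)+l_k(j)-l_k(j+1)+\alpha l_k(j+2)$. The transition probabilities are $\mathbb{P}(X_{k+1}=X_k\pm1\mid\mathcal{F}_k)=\dfrac{e^{\pm\beta\Delta_k(X_k)}}{e^{\beta\Delta_k(X_k)}+e^{-\beta\Delta_k(X_k)}}$. Let $Z_k(j):=\sum_{m=1}^k\mathbf{1}_{\{X_m=j\}}$, $Z_\infty(j):=\lim_k Z_k(j)$, and $R':=\{j\in\mathbb{Z}:Z_\infty(j)=\infty\}$. *)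

theory Defs
  imports "HOL-Probability.Probability"
begin

definition edge_local_time :: "(nat \<Rightarrow> int) \<Rightarrow> nat \<Rightarrow> int \<Rightarrow> nat" where
  "edge_local_time p k j = card {m \<in> {1..k}. {p (m - 1), p m} = {j - 1, j}}"

definition Delta :: "real \<Rightarrow> (nat \<Rightarrow> int) \<Rightarrow> nat \<Rightarrow> int \<Rightarrow> real" where
  "Delta \<alpha> p k j =
     - \<alpha> * real (edge_local_time p k (j - 1)) + real (edge_local_time p k j)
     - real (edge_local_time p k (j + 1)) + \<alpha> * real (edge_local_time p k (j + 2))"

definition step_prob :: "real \<Rightarrow> real \<Rightarrow> (nat \<Rightarrow> int) \<Rightarrow> nat \<Rightarrow> real" where
  "step_prob \<alpha> \<beta> p k =
     (let D = Delta \<alpha> p k (p k) in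
      if p (Suc k) = p k + 1 then exp (\<beta> * D) / (exp (\<beta> * D) + exp (- \<beta> * D))
      else if p (Suc k) = p k - 1 then exp (- \<beta> * D) / (exp (\<beta> * D) + exp (- \<beta> * D))
      else 0)"

definition path_prob :: "real \<Rightarrow> real \<Rightarrow> (nat \<Rightarrow> int) \<Rightarrow> nat \<Rightarrow> real" where
  "path_prob \<alpha> \<beta> p n = (if p 0 = 0 then (\<Prod>k<n. step_prob \<alpha> \<beta> p k) else 0)"

definition is_walk :: "'a measure \<Rightarrow> real \<Rightarrow> real \<Rightarrow> (nat \<Rightarrow> 'a \<Rightarrow> int) \<Rightarrow> bool" where
  "is_walk M \<alpha> \<beta> X \<longleftrightarrow>
     prob_space M \<and>
     (\<forall>i. X i \<in> measurable M (count_space UNIV)) \<and>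
     (\<forall>n (p :: nat \<Rightarrow> int). measure M {\<omega> \<in> space M. \<forall>i\<le>n. X i \<omega> = p i} = path_prob \<alpha> \<beta> p n)"

definition R' :: "(nat \<Rightarrow> 'a \<Rightarrow> int) \<Rightarrow> 'a \<Rightarrow> int set" where
  "R' X \<omega> = {j. infinite {m. m \<ge> 1 \<and> X m \<omega> = j}}"

end

theory Submission
  imports Defs "HOL-Library.More_List"
begin

text \<open>Write \<open>d\<close> and \<open>f\<close> for \<open>\<Delta>_k(x + 1)\<close> and \<open>\<Delta>_k(x + 2)\<close>. If \<open>R'\<close> is the window
  \<open>{x, ..., x + 3}\<close> and the events (a), (b) happen only finitely often, then from some time on
  the walk stays in the window, avoids (a) and (b), and crosses from \<open>x\<close> to \<open>x + 1\<close> infinitely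
  often; we show that this has probability zero. From every state \<open>(q, d, f)\<close> of the window there
  is a short route forcing (a) or (b): bounces between \<open>x + 1\<close> and \<open>x + 2\<close> when \<open>d + f\<close> is far
  from \<open>0\<close>, otherwise excursions to \<open>x\<close> or \<open>x + 3\<close>, each of which moves \<open>d + f\<close> by
  \<open>2 (\<alpha> - 1)\<close>. The probabilities of these routes are bounded below uniformly and assemble into a
  potential \<open>G \<le> 1 / 2\<close> such that \<open>\<theta> ^ (number of crossings) * (1 - G)\<close>, stopped at the first
  event, is a supermartingale for some \<open>\<theta> > 1\<close>. By Markov's inequality, \<open>m\<close> crossings without
  an event have probability at most \<open>2 / \<theta> ^ m\<close>.\<close>

section \<open>Local times and step probabilities\<close>

lemma card_filter_atLeastAtMost_Suc:
  "card {m \<in> {1..Suc k}. P m} = card {m \<in> {1..k}. P m} + (if P (Suc k) then 1 else 0)"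
proof -
  have "{m \<in> {1..Suc k}. P m} = {m \<in> {1..k}. P m} \<union> (if P (Suc k) then {Suc k} else {})"
    by (auto simp: le_Suc_eq)
  then show ?thesis by (simp add: card_insert_if)
qed

lemma edge_local_time_cong:
  assumes "\<And>i. i \<le> k \<Longrightarrow> p i = q i"
  shows "edge_local_time p k j = edge_local_time q k j"
proof -
  have "{m \<in> {1..k}. {p (m - 1), p m} = {j - 1, j}} = {m \<in> {1..k}. {q (m - 1), q m} = {j - 1, j}}"
    using assms by (auto simp: diff_le_self)
  then show ?thesis unfolding edge_local_time_def by simp
qed

lemma Delta_cong:
  assumes "\<And>i. i \<le> k \<Longrightarrow> p i = q i"
  shows "Delta a p k j = Delta a q k j"
  unfolding Delta_def using edge_local_time_cong[OF assms] by simp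

lemma edge_local_time_Suc:
  "edge_local_time p (Suc k) j
     = edge_local_time p k j + (if {p k, p (Suc k)} = {j - 1, j} then 1 else 0)"
  unfolding edge_local_time_def
  using card_filter_atLeastAtMost_Suc[where P = "\<lambda>m. {p (m - 1), p m} = {j - 1, j}"] by simp

text \<open>A step between \<open>u\<close> and \<open>v = u \<plusminus> 1\<close> traverses the edge \<open>{e - 1, e}\<close> with
  \<open>e = max u v\<close>.\<close>

lemma edge_local_time_extend:
  assumes "v = p N + 1 \<or> v = p N - 1"
  shows "edge_local_time (p(Suc N := v)) (Suc N) j
           = edge_local_time p N j + (if j = max (p N) v then 1 else 0)"
proof -
  have "edge_local_time (p(Suc N := v)) N j = edge_local_time p N j"
    by (rule edge_local_time_cong) auto
  moreover have "({p N, v} = {j - 1, j}) \<longleftrightarrow> j = max (p N) v"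
    using assms by (auto simp: doubleton_eq_iff)
  ultimately show ?thesis using edge_local_time_Suc[of "p(Suc N := v)" N j] by simp
qed

definition Delta_increment :: "real \<Rightarrow> int \<Rightarrow> int \<Rightarrow> real" where
  "Delta_increment a j e = - a * of_bool (e = j - 1) + of_bool (e = j) - of_bool (e = j + 1)
     + a * of_bool (e = j + 2)"

lemma Delta_extend:
  assumes "v = p N + 1 \<or> v = p N - 1"
  shows "Delta a (p(Suc N := v)) (Suc N) j = Delta a p N j + Delta_increment a j (max (p N) v)"
  unfolding Delta_def Delta_increment_def edge_local_time_extend[where p = p and N = N and v = v, OF assms]
  by (simp add: algebra_simps)

lemma step_prob_cong:
  assumes "\<And>i. i \<le> Suc k \<Longrightarrow> p i = q i"
  shows "step_prob a b p k = step_prob a b q k"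
proof -
  have "Delta a p k (p k) = Delta a q k (q k)" using assms Delta_cong[of k p q] by simp
  then show ?thesis unfolding step_prob_def using assms by (simp add: Let_def)
qed

lemma path_prob_extend:
  "path_prob a b (p(Suc N := v)) (Suc N) = path_prob a b p N * step_prob a b (p(Suc N := v)) N"
proof -
  have "(\<Prod>k<N. step_prob a b (p(Suc N := v)) k) = (\<Prod>k<N. step_prob a b p k)"
    by (intro prod.cong refl step_prob_cong) auto
  then show ?thesis unfolding path_prob_def by simp
qed

lemma step_prob_nonneg: "step_prob a b p k \<ge> 0"
  unfolding step_prob_def Let_def by (auto intro!: divide_nonneg_nonneg add_nonneg_nonneg)

lemma path_prob_nonneg: "path_prob a b p N \<ge> 0"
  unfolding path_prob_def using step_prob_nonneg by (auto intro!: prod_nonneg)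

definition right_prob :: "real \<Rightarrow> real \<Rightarrow> real" where
  "right_prob b D = exp (b * D) / (exp (b * D) + exp (- b * D))"

lemma right_prob_eq: "right_prob b D = 1 / (1 + exp (- 2 * b * D))"
proof -
  have "exp (b * D) + exp (- b * D) = exp (b * D) * (1 + exp (- 2 * b * D))"
    by (simp add: distrib_left exp_add[symmetric])
  then show ?thesis unfolding right_prob_def by simp
qed

lemma right_prob_pos: "right_prob b D > 0"
  unfolding right_prob_eq by (simp add: add_pos_pos)

lemma right_prob_le_1: "right_prob b D \<le> 1"
  unfolding right_prob_eq by (simp add: add_pos_pos divide_le_eq_1)

lemma right_prob_add_neg: "right_prob b D + right_prob b (- D) = 1"
proof -
  have "exp (b * D) + exp (- (b * D)) > 0" by (simp add: add_pos_pos)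
  then show ?thesis unfolding right_prob_def by (simp add: add.commute add_divide_distrib[symmetric])
qed

lemma right_prob_mono: "b \<ge> 0 \<Longrightarrow> D \<le> D' \<Longrightarrow> right_prob b D \<le> right_prob b D'"
  unfolding right_prob_eq
  by (intro divide_left_mono) (auto simp: add_pos_pos mult_le_cancel_left mult_left_mono)

lemma right_prob_zero: "right_prob b 0 = 1 / 2"
  unfolding right_prob_def by simp

lemma step_prob_right: "step_prob a b (p(Suc N := p N + 1)) N = right_prob b (Delta a p N (p N))"
proof -
  have "Delta a (p(Suc N := p N + 1)) N (p N) = Delta a p N (p N)" by (rule Delta_cong) auto
  then show ?thesis unfolding step_prob_def right_prob_def by (simp add: Let_def)
qed

lemma step_prob_left: "step_prob a b (p(Suc N := p N - 1)) N = right_prob b (- Delta a p N (p N))"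
proof -
  have "Delta a (p(Suc N := p N - 1)) N (p N) = Delta a p N (p N)" by (rule Delta_cong) auto
  then show ?thesis unfolding step_prob_def right_prob_def by (simp add: Let_def add.commute)
qed

section \<open>Nearest-neighbour paths\<close>

text \<open>Paths of length \<open>N\<close> are padded with zeros, so that a path of the walk up to time \<open>N\<close>
  is an element of the finite set \<open>nn_paths N\<close>.\<close>

definition nn_paths :: "nat \<Rightarrow> (nat \<Rightarrow> int) set" where
  "nn_paths N = {p. p 0 = 0 \<and> (\<forall>k<N. p (Suc k) = p k + 1 \<or> p (Suc k) = p k - 1) \<and> (\<forall>k>N. p k = 0)}"

definition extend_path :: "nat \<Rightarrow> (nat \<Rightarrow> int) \<times> int \<Rightarrow> nat \<Rightarrow> int" where
  "extend_path N = (\<lambda>(p, s). p(Suc N := p N + s))"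

lemma nn_paths_0: "nn_paths 0 = {\<lambda>_. 0}"
  unfolding nn_paths_def by (auto simp: fun_eq_iff) (metis neq0_conv)

lemma nn_paths_Suc: "nn_paths (Suc N) = extend_path N ` (nn_paths N \<times> {1, -1})"
proof
  show "nn_paths (Suc N) \<subseteq> extend_path N ` (nn_paths N \<times> {1, -1})"
  proof
    fix q assume q: "q \<in> nn_paths (Suc N)"
    have "q(Suc N := 0) \<in> nn_paths N" using q unfolding nn_paths_def by (auto simp: less_Suc_eq)
    moreover have "q (Suc N) - q N \<in> {1, -1}" using q unfolding nn_paths_def by force
    moreover have "q = extend_path N (q(Suc N := 0), q (Suc N) - q N)"
      unfolding extend_path_def by auto
    ultimately show "q \<in> extend_path N ` (nn_paths N \<times> {1, -1})" by blast
  qed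
  show "extend_path N ` (nn_paths N \<times> {1, -1}) \<subseteq> nn_paths (Suc N)"
    unfolding extend_path_def nn_paths_def by (auto simp: less_Suc_eq)
qed

lemma finite_nn_paths: "finite (nn_paths N)"
  by (induction N) (auto simp: nn_paths_0 nn_paths_Suc)

lemma inj_on_extend_path: "inj_on (extend_path N) (nn_paths N \<times> {1, -1})"
proof (rule inj_onI, clarify)
  fix p s p' s'
  assume p: "p \<in> nn_paths N" and p': "p' \<in> nn_paths N"
    and e: "extend_path N (p, s) = extend_path N (p', s')"
  then have e': "p(Suc N := p N + s) = p'(Suc N := p' N + s')" unfolding extend_path_def by simp
  have "p (Suc N) = 0" "p' (Suc N) = 0" using p p' unfolding nn_paths_def by auto
  then have "p = p'" using fun_cong[OF e'] by (metis fun_upd_other ext)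
  moreover have "p N + s = p' N + s'" using fun_cong[OF e', of "Suc N"] by simp
  ultimately show "p = p' \<and> s = s'" by simp
qed

lemma sum_nn_paths_Suc:
  "(\<Sum>q\<in>nn_paths (Suc N). f q)
     = (\<Sum>p\<in>nn_paths N. f (p(Suc N := p N + 1)) + f (p(Suc N := p N - 1)))"
proof -
  have "(\<Sum>q\<in>nn_paths (Suc N). f q) = (\<Sum>a\<in>nn_paths N \<times> {1, -1}. f (extend_path N a))"
    unfolding nn_paths_Suc by (rule sum.reindex[OF inj_on_extend_path, unfolded comp_def])
  also have "\<dots> = (\<Sum>p\<in>nn_paths N. \<Sum>s\<in>{1, -1}. f (extend_path N (p, s)))"
    using sum.cartesian_product[of "\<lambda>p s. f (extend_path N (p, s))" "{1, -1}" "nn_paths N"]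
    by (simp add: case_prod_eta)
  finally show ?thesis unfolding extend_path_def by simp
qed

lemma sum_path_prob_nn_paths: "(\<Sum>p\<in>nn_paths N. path_prob a b p N) = 1"
proof (induction N)
  case 0
  then show ?case by (simp add: nn_paths_0 path_prob_def)
next
  case (Suc N)
  have "(\<Sum>q\<in>nn_paths (Suc N). path_prob a b q (Suc N))
      = (\<Sum>p\<in>nn_paths N. path_prob a b p N
           * (right_prob b (Delta a p N (p N)) + right_prob b (- Delta a p N (p N))))"
    unfolding sum_nn_paths_Suc path_prob_extend step_prob_right step_prob_left
    by (simp add: algebra_simps)
  then show ?case using Suc by (simp add: right_prob_add_neg)
qed

definition nn_path :: "(nat \<Rightarrow> int) \<Rightarrow> bool" where
  "nn_path p \<longleftrightarrow> p 0 = 0 \<and> (\<forall>k. p (Suc k) = p k + 1 \<or> p (Suc k) = p k - 1)"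

lemma int_seq_intermediate_value:
  fixes p :: "nat \<Rightarrow> int"
  assumes steps: "\<And>k. \<bar>p (Suc k) - p k\<bar> \<le> 1" and "a \<le> b" "p a \<le> v" "v \<le> p b"
  shows "\<exists>j\<in>{a..b}. p j = v"
  using assms(2-4)
proof (induction b arbitrary: v rule: dec_induct)
  case base
  then show ?case by auto
next
  case (step b)
  show ?case
  proof (cases "v \<le> p b")
    case True
    then show ?thesis using step.IH[OF step.prems(1)] by force
  next
    case False
    then have "p (Suc b) = v" using steps[of b] step.prems by auto
    then show ?thesis using step.hyps by force
  qed
qed

lemma nn_path_intermediate_value:
  assumes "nn_path p" "a \<le> b" "min (p a) (p b) \<le> v" "v \<le> max (p a) (p b)"
  shows "\<exists>j\<in>{a..b}. p j = v"
proof -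
  have steps: "\<bar>p (Suc k) - p k\<bar> \<le> 1" for k
  proof -
    have "p (Suc k) = p k + 1 \<or> p (Suc k) = p k - 1" using assms(1) unfolding nn_path_def by blast
    then show ?thesis by auto
  qed
  show ?thesis
  proof (cases "p a \<le> p b")
    case True
    then show ?thesis using int_seq_intermediate_value[where p = p and v = v, OF steps assms(2)] assms(3,4) by simp
  next
    case False
    have "\<bar>- p (Suc k) - - p k\<bar> \<le> 1" for k using steps[of k] by simp
    from int_seq_intermediate_value[where p = "\<lambda>k. - p k" and v = "- v", OF this assms(2)]
    show ?thesis using False assms(3,4) by auto
  qed
qed

lemma infinite_imp_card_initial_segment_ge:
  assumes "infinite (I :: nat set)"
  shows "\<exists>n. m \<le> card {k \<in> I. k < n}"
proof -
  obtain F where F: "F \<subseteq> I" "finite F" "card F = m"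
    using infinite_arbitrarily_large[OF assms] by blast
  obtain n where "F \<subseteq> {..<n}" using finite_nat_bounded[OF F(2)] by blast
  then have "card F \<le> card {k \<in> I. k < n}" using F by (intro card_mono) auto
  then show ?thesis using F by auto
qed

lemma infinite_Collect_ge_1_iff: "infinite {m :: nat. m \<ge> 1 \<and> P m} \<longleftrightarrow> infinite {m. P m}"
proof -
  have "{m. P m} \<subseteq> insert 0 {m. m \<ge> 1 \<and> P m}" "{m. m \<ge> 1 \<and> P m} \<subseteq> {m. P m}" by auto
  then show ?thesis by (meson finite_insert finite_subset)
qed

lemma nn_path_eventually_confined:
  assumes p: "nn_path p" and a: "infinite {k. p k = a}" and b: "infinite {k. p k = b}"
    and below: "finite {k. p k = a - 1}" and above: "finite {k. p k = b + 1}"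
  shows "\<exists>T. \<forall>k\<ge>T. a \<le> p k \<and> p k \<le> b"
proof -
  obtain T where T: "{k. p k = a - 1} \<union> {k. p k = b + 1} \<subseteq> {..<T}"
    using finite_nat_bounded[of "{k. p k = a - 1} \<union> {k. p k = b + 1}"] below above by auto
  have "a \<le> p k \<and> p k \<le> b" if "T \<le> k" for k
  proof (intro conjI; rule ccontr)
    assume "\<not> a \<le> p k"
    obtain k' where "k' > k" "p k' = a" using a unfolding infinite_nat_iff_unbounded by auto
    then obtain j where "j \<ge> k" "p j = a - 1"
      using nn_path_intermediate_value[OF p, of k k' "a - 1"] \<open>\<not> a \<le> p k\<close> by auto
    then show False using T that by auto
  next
    assume "\<not> p k \<le> b"
    obtain k' where "k' > k" "p k' = b" using b unfolding infinite_nat_iff_unbounded by auto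
    then obtain j where "j \<ge> k" "p j = b + 1"
      using nn_path_intermediate_value[OF p, of k k' "b + 1"] \<open>\<not> p k \<le> b\<close> by auto
    then show False using T that by auto
  qed
  then show ?thesis by blast
qed

section \<open>Events determined by an initial segment of the walk\<close>

locale walk_law = prob_space M
  for M :: "'a measure" +
  fixes \<alpha> \<beta> :: real and X :: "nat \<Rightarrow> 'a \<Rightarrow> int"
  assumes measurable_X: "\<And>i. X i \<in> measurable M (count_space UNIV)"
    and measure_initial_segment:
      "\<And>n p. measure M {\<omega> \<in> space M. \<forall>i\<le>n. X i \<omega> = p i} = path_prob \<alpha> \<beta> p n"
begin

definition traj :: "'a \<Rightarrow> nat \<Rightarrow> int" where
  "traj \<omega> = (\<lambda>i. X i \<omega>)"

definition cylinder :: "(nat \<Rightarrow> int) \<Rightarrow> nat \<Rightarrow> 'a set" where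
  "cylinder p N = {\<omega> \<in> space M. \<forall>i\<le>N. X i \<omega> = p i}"

lemma sets_cylinder: "cylinder p N \<in> sets M"
proof -
  have "{\<omega> \<in> space M. X i \<omega> = p i} \<in> sets M" for i
  proof -
    have "X i -` {p i} \<inter> space M \<in> sets M" by (rule measurable_sets[OF measurable_X]) simp
    moreover have "{\<omega> \<in> space M. X i \<omega> = p i} = X i -` {p i} \<inter> space M" by auto
    ultimately show ?thesis by simp
  qed
  then have "{\<omega> \<in> space M. \<forall>i\<in>{..N}. X i \<omega> = p i} \<in> sets M"
    by (intro sets.sets_Collect_finite_All') auto
  moreover have "cylinder p N = {\<omega> \<in> space M. \<forall>i\<in>{..N}. X i \<omega> = p i}"
    unfolding cylinder_def by auto
  ultimately show ?thesis by (simp only:)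
qed

lemma measure_cylinder: "measure M (cylinder p N) = path_prob \<alpha> \<beta> p N"
  unfolding cylinder_def by (rule measure_initial_segment)

lemma disjoint_family_on_cylinder: "disjoint_family_on (\<lambda>p. cylinder p N) (nn_paths N)"
  unfolding disjoint_family_on_def
proof (intro ballI impI)
  fix p q assume p: "p \<in> nn_paths N" and q: "q \<in> nn_paths N" and "p \<noteq> q"
  then obtain i where "p i \<noteq> q i" by (meson ext)
  moreover have "\<forall>i>N. p i = q i" using p q unfolding nn_paths_def by auto
  ultimately have "i \<le> N" "p i \<noteq> q i" by (auto simp: not_le[symmetric])
  then show "cylinder p N \<inter> cylinder q N = {}" unfolding cylinder_def by auto
qed

definition determined_upto :: "nat \<Rightarrow> (nat \<Rightarrow> int) set \<Rightarrow> bool" where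
  "determined_upto N A \<longleftrightarrow> (\<forall>p q. (\<forall>i\<le>N. p i = q i) \<longrightarrow> (p \<in> A \<longleftrightarrow> q \<in> A))"

lemma sets_traj_determined:
  assumes A: "determined_upto N A"
  shows "{\<omega> \<in> space M. traj \<omega> \<in> A} \<in> sets M"
proof -
  have "{\<omega> \<in> space M. traj \<omega> \<in> A} = (\<Union>l\<in>{l. nth_default 0 l \<in> A}. cylinder (nth_default 0 l) N)"
  proof (intro equalityI subsetI)
    fix \<omega> assume \<omega>: "\<omega> \<in> {\<omega> \<in> space M. traj \<omega> \<in> A}"
    define l where "l = map (\<lambda>i. X i \<omega>) [0..<Suc N]"
    have agree: "\<forall>i\<le>N. nth_default 0 l i = traj \<omega> i"
      unfolding l_def traj_def nth_default_def by (auto simp del: upt_Suc)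
    then have "nth_default 0 l \<in> A" using \<omega> A unfolding determined_upto_def by blast
    moreover have "\<omega> \<in> cylinder (nth_default 0 l) N" using \<omega> agree unfolding cylinder_def traj_def by auto
    ultimately show "\<omega> \<in> (\<Union>l\<in>{l. nth_default 0 l \<in> A}. cylinder (nth_default 0 l) N)" by blast
  next
    fix \<omega> assume "\<omega> \<in> (\<Union>l\<in>{l. nth_default 0 l \<in> A}. cylinder (nth_default 0 l) N)"
    then obtain l where l: "nth_default 0 l \<in> A" "\<omega> \<in> cylinder (nth_default 0 l) N" by blast
    then have "\<forall>i\<le>N. nth_default 0 l i = traj \<omega> i" unfolding cylinder_def traj_def by auto
    then show "\<omega> \<in> {\<omega> \<in> space M. traj \<omega> \<in> A}"
      using l A unfolding determined_upto_def cylinder_def by auto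
  qed
  also have "\<dots> \<in> sets M" by (intro sets.countable_UN') (auto intro: sets_cylinder)
  finally show ?thesis .
qed

text \<open>The cylinders of the paths in \<open>nn_paths N\<close> carry total mass one, so only those paths count.\<close>

lemma measure_traj_determined_le:
  assumes A: "determined_upto N A"
  shows "measure M {\<omega> \<in> space M. traj \<omega> \<in> A} \<le> (\<Sum>p\<in>nn_paths N \<inter> A. path_prob \<alpha> \<beta> p N)"
proof -
  define U where "U = (\<Union>p\<in>nn_paths N \<inter> A. cylinder p N)"
  define W where "W = space M - (\<Union>p\<in>nn_paths N. cylinder p N)"
  have sets_U: "U \<in> sets M" unfolding U_def using finite_nn_paths sets_cylinder by auto
  have sets_all: "(\<Union>p\<in>nn_paths N. cylinder p N) \<in> sets M" using finite_nn_paths sets_cylinder by auto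
  have "measure M (\<Union>p\<in>nn_paths N. cylinder p N) = 1"
    using finite_measure_finite_Union[OF finite_nn_paths _ disjoint_family_on_cylinder]
      sets_cylinder measure_cylinder sum_path_prob_nn_paths by auto
  then have "W \<in> null_sets M"
    unfolding W_def using finite_measure_compl[OF sets_all] prob_space sets_all
    by (simp add: null_setsI emeasure_eq_measure)
  moreover have "{\<omega> \<in> space M. traj \<omega> \<in> A} \<subseteq> U \<union> W"
  proof
    fix \<omega> assume \<omega>: "\<omega> \<in> {\<omega> \<in> space M. traj \<omega> \<in> A}"
    show "\<omega> \<in> U \<union> W"
    proof (cases "\<omega> \<in> (\<Union>p\<in>nn_paths N. cylinder p N)")
      case True
      then obtain p where p: "p \<in> nn_paths N" "\<omega> \<in> cylinder p N" by blast
      then have "\<forall>i\<le>N. p i = traj \<omega> i" unfolding cylinder_def traj_def by auto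
      then have "p \<in> A" using \<omega> A unfolding determined_upto_def by blast
      then show ?thesis using p unfolding U_def by blast
    qed (use \<omega> W_def in auto)
  qed
  ultimately have "measure M {\<omega> \<in> space M. traj \<omega> \<in> A} \<le> measure M (U \<union> W)"
    using sets_U by (intro finite_measure_mono) auto
  also have "\<dots> = measure M U" using \<open>W \<in> null_sets M\<close> by (rule measure_Un_null_set[OF sets_U])
  also have "\<dots> \<le> (\<Sum>p\<in>nn_paths N \<inter> A. measure M (cylinder p N))"
    unfolding U_def using finite_nn_paths sets_cylinder by (intro finite_measure_subadditive_finite) auto
  finally show ?thesis by (simp add: measure_cylinder)
qed

lemma AE_nn_path: "AE \<omega> in M. nn_path (traj \<omega>)"
proof -
  define A where "A N = {p :: nat \<Rightarrow> int. \<not> (p 0 = 0 \<and> (\<forall>k<N. p (Suc k) = p k + 1 \<or> p (Suc k) = p k - 1))}"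
    for N
  have A: "determined_upto N (A N)" for N
    unfolding determined_upto_def
  proof (intro allI impI)
    fix p q :: "nat \<Rightarrow> int" assume "\<forall>i\<le>N. p i = q i"
    then have "p 0 = q 0" "\<forall>k<N. p (Suc k) = q (Suc k) \<and> p k = q k" by (auto simp: Suc_le_eq)
    then show "p \<in> A N \<longleftrightarrow> q \<in> A N" unfolding A_def by auto
  qed
  have "AE \<omega> in M. traj \<omega> \<notin> A N" for N
  proof (rule AE_I')
    have "nn_paths N \<inter> A N = {}" unfolding nn_paths_def A_def by auto
    then have "measure M {\<omega> \<in> space M. traj \<omega> \<in> A N} \<le> 0"
      using measure_traj_determined_le[OF A, of N] by simp
    then have "measure M {\<omega> \<in> space M. traj \<omega> \<in> A N} = 0"
      using measure_nonneg[of M] by (meson order_antisym)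
    then show "{\<omega> \<in> space M. traj \<omega> \<in> A N} \<in> null_sets M"
      using sets_traj_determined[OF A] by (simp add: null_setsI emeasure_eq_measure)
  qed auto
  then have "AE \<omega> in M. \<forall>N. traj \<omega> \<notin> A N" by (simp add: AE_all_countable)
  then show ?thesis
  proof eventually_elim
    case (elim \<omega>)
    have "traj \<omega> (Suc k) = traj \<omega> k + 1 \<or> traj \<omega> (Suc k) = traj \<omega> k - 1" for k
      using elim[rule_format, of "Suc k"] unfolding A_def by simp
    moreover have "traj \<omega> 0 = 0" using elim[rule_format, of 0] unfolding A_def by simp
    ultimately show ?case unfolding nn_path_def by blast
  qed
qed

end

section \<open>Lower bounds for hitting probabilities\<close>

locale walk_potential =
  fixes \<alpha> \<beta> C :: real and x :: int
  assumes alpha_gt_1: "\<alpha> > 1" and beta_pos: "\<beta> > 0" and C_pos: "C > 0"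
begin

abbreviation up :: "real \<Rightarrow> real" where
  "up \<equiv> right_prob \<beta>"

lemma up_mono: "D \<le> D' \<Longrightarrow> up D \<le> up D'"
  using beta_pos by (intro right_prob_mono) auto

lemma up_ge_half: "D \<ge> 0 \<Longrightarrow> up D \<ge> 1 / 2"
  using up_mono[of 0 D] by (simp add: right_prob_zero)

definition kappa :: real where
  "kappa = exp (2 * \<beta> * C)"

definition rho :: "nat \<Rightarrow> real" where
  "rho i = 1 / (1 + kappa * exp (- 4 * \<beta> * real i))\<^sup>2"

definition rho_prod :: "nat \<Rightarrow> real" where
  "rho_prod n = (\<Prod>i<n. rho i)"

definition delta :: real where
  "delta = exp (- 2 * kappa / (1 - exp (- 4 * \<beta>)))"

lemma kappa_ge_1: "kappa \<ge> 1"
  unfolding kappa_def using beta_pos C_pos by simp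

lemma kappa_pos: "kappa > 0"
  unfolding kappa_def by simp

lemma rho_pos: "rho i > 0"
proof -
  have "0 < 1 + kappa * exp (- 4 * \<beta> * real i)" using kappa_pos by (intro add_pos_pos mult_pos_pos) auto
  then show ?thesis unfolding rho_def by simp
qed

lemma rho_le_1: "rho i \<le> 1"
proof -
  have "1 \<le> (1 + kappa * exp (- 4 * \<beta> * real i))\<^sup>2" using kappa_ge_1 by (simp add: one_le_power)
  then show ?thesis unfolding rho_def by (simp add: divide_le_eq_1)
qed

lemma up_ge_rho_root:
  assumes "2 * real i \<le> a + C"
  shows "1 / (1 + kappa * exp (- 4 * \<beta> * real i)) \<le> up a"
proof -
  have "- 2 * \<beta> * a \<le> 2 * \<beta> * C + - 4 * \<beta> * real i"
    using assms beta_pos mult_left_mono[OF assms, of "2 * \<beta>"] by (simp add: algebra_simps)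
  then have "exp (- 2 * \<beta> * a) \<le> kappa * exp (- 4 * \<beta> * real i)"
    unfolding kappa_def by (simp add: exp_add[symmetric])
  then show ?thesis
    unfolding right_prob_eq using kappa_pos by (intro divide_left_mono) (auto simp: add_pos_pos)
qed

lemma rho_le_up_mult_up:
  assumes "2 * real i \<le> a + C" "2 * real i \<le> b + C"
  shows "rho i \<le> up a * up b"
proof -
  have "rho i = (1 / (1 + kappa * exp (- 4 * \<beta> * real i))) * (1 / (1 + kappa * exp (- 4 * \<beta> * real i)))"
    unfolding rho_def power2_eq_square by simp
  also have "\<dots> \<le> up a * up b"
    using up_ge_rho_root[OF assms(1)] up_ge_rho_root[OF assms(2)] kappa_pos right_prob_pos[of \<beta> a]
    by (intro mult_mono) (auto simp: add_pos_pos)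
  finally show ?thesis .
qed

lemma rho_prod_pos: "rho_prod n > 0"
  unfolding rho_prod_def using rho_pos by (simp add: prod_pos)

lemma rho_prod_le_1: "rho_prod n \<le> 1"
  unfolding rho_prod_def using rho_pos rho_le_1 by (intro prod_le_1) (auto simp: less_imp_le)

lemma rho_prod_Suc: "rho_prod (Suc n) = rho n * rho_prod n"
  unfolding rho_prod_def by simp

lemma rho_prod_antimono: "m \<le> n \<Longrightarrow> rho_prod n \<le> rho_prod m"
proof (induction n rule: dec_induct)
  case (step n)
  have "rho n * rho_prod n \<le> rho_prod n"
    using rho_le_1[of n] rho_pos[of n] rho_prod_pos[of n] by (intro mult_left_le_one_le) auto
  then show ?case unfolding rho_prod_Suc using step.IH by simp
qed simp

lemma rho_ge_exp: "rho i \<ge> exp (- 2 * kappa * exp (- 4 * \<beta>) ^ i)"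
proof -
  define y where "y = kappa * exp (- 4 * \<beta> * real i)"
  have y: "y \<ge> 0" unfolding y_def using kappa_ge_1 by simp
  have "(1 + y)\<^sup>2 \<le> exp y ^ 2" using exp_ge_add_one_self[of y] y by (intro power_mono) auto
  also have "\<dots> = exp (2 * y)" using exp_of_nat_mult[of 2 y] by simp
  finally have "1 / exp (2 * y) \<le> 1 / (1 + y)\<^sup>2" using y by (intro divide_left_mono) auto
  moreover have "exp (- 4 * \<beta>) ^ i = exp (- 4 * \<beta> * real i)"
    by (simp add: exp_of_nat_mult[symmetric] mult.commute)
  ultimately show ?thesis unfolding rho_def y_def by (simp add: exp_minus inverse_eq_divide mult.assoc)
qed

text \<open>The constant \<open>delta\<close> comes from \<open>1 + y \<le> exp y\<close> and the geometric series
  \<open>\<Sum>i. exp (- 4 * \<beta>) ^ i\<close>.\<close>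

lemma rho_prod_ge_delta: "rho_prod n \<ge> delta"
proof -
  define q where "q = exp (- 4 * \<beta>)"
  have q: "0 < q" "q < 1" unfolding q_def using beta_pos by auto
  have "(\<Sum>i<n. q ^ i) = (1 - q ^ n) / (1 - q)" using q by (simp add: sum_gp_strict)
  also have "\<dots> \<le> 1 / (1 - q)" using q by (intro divide_right_mono) auto
  finally have "2 * kappa * (\<Sum>i<n. q ^ i) \<le> 2 * kappa * (1 / (1 - q))"
    using kappa_ge_1 by (intro mult_left_mono) auto
  then have "delta \<le> exp (- 2 * kappa * (\<Sum>i<n. q ^ i))" unfolding delta_def q_def by simp
  also have "\<dots> = (\<Prod>i<n. exp (- 2 * kappa * q ^ i))"
    by (simp add: exp_sum[symmetric] sum_distrib_left)
  also have "\<dots> \<le> rho_prod n"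
    unfolding rho_prod_def q_def using rho_ge_exp by (intro prod_mono) (auto simp: less_imp_le)
  finally show ?thesis .
qed

lemma delta_pos: "delta > 0"
  unfolding delta_def by simp

lemma delta_le_1: "delta \<le> 1"
  using rho_prod_ge_delta[of 0] by (simp add: rho_prod_def)

lemma delta_le_rho_0: "delta \<le> rho 0"
  using rho_prod_ge_delta[of 1] by (simp add: rho_prod_def)

text \<open>From \<open>x + 1\<close> with \<open>D1 = d\<close> and a very negative sum \<open>D1 + D2\<close>, each excursion
  \<open>x + 1 \<rightarrow> x + 2 \<rightarrow> x + 1\<close> lowers \<open>D1\<close> by 2; \<open>bounce_lb d\<close> bounds from below the probability
  that the \<open>\<lceil>(d + C) / 2\<rceil>\<close> excursions leading to \<open>D1 \<le> - C\<close> all happen. \<open>bounce_lb2 e S\<close> is the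
  same bound one step earlier, at \<open>x + 2\<close> with \<open>D1 = e\<close> and \<open>D1 + D2 = S\<close>.\<close>

definition bounce_lb :: "real \<Rightarrow> real" where
  "bounce_lb d = rho_prod (nat \<lceil>(d + C) / 2\<rceil>)"

definition bounce_lb2 :: "real \<Rightarrow> real \<Rightarrow> real" where
  "bounce_lb2 e S = min (1 / 2) (up (e - S) * (if e - 1 > - C then bounce_lb (e - 1) else 1))"

lemma bounce_lb_ge_delta: "bounce_lb d \<ge> delta"
  unfolding bounce_lb_def by (rule rho_prod_ge_delta)

lemma bounce_lb_le_1: "bounce_lb d \<le> 1"
  unfolding bounce_lb_def by (rule rho_prod_le_1)

lemma bounce_lb_pos: "bounce_lb d > 0"
  unfolding bounce_lb_def by (rule rho_prod_pos)

lemma bounce_lb_le_half_up: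
  assumes "d > - C"
  shows "bounce_lb d \<le> up d / 2"
proof -
  have "0 < \<lceil>(d + C) / 2\<rceil>" using assms by simp
  then have "bounce_lb d \<le> rho_prod 1" unfolding bounce_lb_def by (intro rho_prod_antimono) linarith
  also have "\<dots> = (1 / (1 + kappa)) * (1 / (1 + kappa))"
    by (simp add: rho_prod_def rho_def power2_eq_square)
  also have "\<dots> \<le> (1 / (1 + kappa)) * (1 / 2)" using kappa_ge_1 by (intro mult_left_mono) auto
  also have "\<dots> \<le> up d * (1 / 2)" using up_ge_rho_root[of 0 d] assms by (intro mult_right_mono) auto
  finally show ?thesis by simp
qed

lemma bounce_lb_le_half: "d > - C \<Longrightarrow> bounce_lb d \<le> 1 / 2"
  using bounce_lb_le_half_up[of d] right_prob_le_1[of \<beta> d] by simp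

lemma bounce_lb_rec:
  assumes d: "d > - C" and S: "S \<le> - C - 1"
  shows "bounce_lb d \<le> up d * up (d - 1 - S) * (if d - 2 > - C then bounce_lb (d - 2) else 1)"
proof -
  define k where "k = \<lceil>(d + C) / 2\<rceil>"
  define n where "n = nat k"
  have k: "0 < k" "of_int k - 1 < (d + C) / 2"
    unfolding k_def using d ceiling_correct[of "(d + C) / 2"] by auto
  then have n: "n \<ge> 1" "2 * real (n - 1) < d + C" unfolding n_def by (auto simp: of_nat_diff)
  have rho_n: "rho (n - 1) \<le> up d * up (d - 1 - S)"
    using n(2) S C_pos by (intro rho_le_up_mult_up) auto
  show ?thesis
  proof (cases "d - 2 > - C")
    case True
    have "\<lceil>(d - 2 + C) / 2\<rceil> = \<lceil>(d + C) / 2 - 1\<rceil>" by (simp add: field_simps)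
    then have "bounce_lb (d - 2) = rho_prod (nat (k - 1))" unfolding bounce_lb_def k_def by simp
    also have "nat (k - 1) = n - 1" unfolding n_def using k(1) by (simp add: nat_diff_distrib')
    finally have "bounce_lb (d - 2) = rho_prod (n - 1)" .
    moreover have "bounce_lb d = rho (n - 1) * rho_prod (n - 1)"
      unfolding bounce_lb_def k_def[symmetric] n_def[symmetric] using n(1) rho_prod_Suc[of "n - 1"] by simp
    ultimately show ?thesis using True rho_n rho_prod_pos by (simp add: mult_right_mono less_imp_le)
  next
    case False
    then have "of_int k < (2 :: real)" using k(2) by (simp add: field_simps)
    then have "n = 1" using k(1) unfolding n_def by simp
    then show ?thesis using False rho_n unfolding bounce_lb_def k_def[symmetric] n_def[symmetric]
      by (simp add: rho_prod_def)
  qed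
qed

lemma bounce_lb_le_up_mult_bounce_lb2:
  assumes "d > - C" "S \<le> - C - 1"
  shows "bounce_lb d \<le> up d * bounce_lb2 (d - 1) S"
proof -
  have "0 \<le> up d" using right_prob_pos less_imp_le by blast
  then have "up d * bounce_lb2 (d - 1) S
      = min (up d * (1 / 2)) (up d * (up (d - 1 - S) * (if d - 2 > - C then bounce_lb (d - 2) else 1)))"
    unfolding bounce_lb2_def min_mult_distrib_left by (simp add: algebra_simps)
  then show ?thesis
    using bounce_lb_le_half_up[OF assms(1)] bounce_lb_rec[OF assms] by (simp add: mult.assoc)
qed

lemma bounce_lb2_le_half: "bounce_lb2 e S \<le> 1 / 2"
  unfolding bounce_lb2_def by simp

lemma bounce_lb2_le: "bounce_lb2 e S \<le> up (e - S) * (if e - 1 > - C then bounce_lb (e - 1) else 1)"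
  unfolding bounce_lb2_def by simp

lemma bounce_lb2_nonneg: "bounce_lb2 e S \<ge> 0"
  unfolding bounce_lb2_def using right_prob_pos bounce_lb_pos by (simp add: less_imp_le)

lemma bounce_lb2_ge:
  assumes "e > - C - 1" "S \<le> - C - 1"
  shows "bounce_lb2 e S \<ge> delta / 2"
proof -
  have "1 / 2 \<le> up (e - S)" using assms by (intro up_ge_half) simp
  moreover have "delta \<le> (if e - 1 > - C then bounce_lb (e - 1) else 1)"
    using bounce_lb_ge_delta delta_le_1 by simp
  ultimately have "1 / 2 * delta \<le> up (e - S) * (if e - 1 > - C then bounce_lb (e - 1) else 1)"
    using delta_pos by (intro mult_mono) auto
  then show ?thesis unfolding bounce_lb2_def using delta_le_1 by simp
qed

text \<open>An excursion \<open>x + 1 \<rightarrow> x \<rightarrow> x + 1\<close> lowers \<open>D1 + D2\<close> by \<open>eta\<close>, an excursion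
  \<open>x + 2 \<rightarrow> x + 3 \<rightarrow> x + 2\<close> raises it by \<open>eta\<close>; \<open>descents S\<close> and \<open>ascents S\<close> count the
  excursions needed to push the sum \<open>S\<close> out of the window \<open>(- C - 1, C + 1)\<close>.\<close>

definition eta :: real where
  "eta = 2 * (\<alpha> - 1)"

definition margin :: real where
  "margin = C + 2"

definition descents :: "real \<Rightarrow> nat" where
  "descents S = nat \<lceil>(S + C + 1) / eta\<rceil>"

definition ascents :: "real \<Rightarrow> nat" where
  "ascents S = nat \<lceil>(C + 1 - S) / eta\<rceil>"

definition max_excursions :: nat where
  "max_excursions = nat \<lceil>2 * (C + 1) / eta\<rceil>"

definition bounces :: "real \<Rightarrow> nat" where
  "bounces f = nat \<lceil>(- margin - f) / 2\<rceil>"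

definition gamma :: real where
  "gamma = up (- margin) * delta / 4"

definition ascent_lb :: "real \<Rightarrow> real \<Rightarrow> real" where
  "ascent_lb f S = gamma ^ ascents S / 4 * rho_prod (bounces f)"

definition mid_lb :: real where
  "mid_lb = min (1 / 2) (up (- margin) * gamma ^ max_excursions * delta / 4)"

definition descent_rate :: real where
  "descent_rate = min (1 / 4) (min mid_lb delta) / 2"

definition hit_min :: real where
  "hit_min = min (delta / 2) (min (gamma ^ max_excursions * delta / 4)
     (min mid_lb (descent_rate ^ max_excursions / 2)))"

definition eps :: real where
  "eps = hit_min / 2"

definition theta :: real where
  "theta = 1 / (1 - eps)"

lemma eta_pos: "eta > 0"
  unfolding eta_def using alpha_gt_1 by simp

lemma margin_pos: "margin > 0"
  unfolding margin_def using C_pos by simp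

lemma gamma_pos: "gamma > 0"
  unfolding gamma_def using right_prob_pos delta_pos by simp

lemma gamma_le_1: "gamma \<le> 1"
proof -
  have "up (- margin) * delta \<le> 1"
    using right_prob_le_1[of \<beta> "- margin"] delta_le_1 delta_pos by (intro mult_le_one) auto
  then show ?thesis unfolding gamma_def by simp
qed

lemma gamma_le_up_rho_0: "gamma \<le> up (- margin) * rho 0"
proof -
  have "delta / 4 \<le> rho 0" using delta_le_rho_0 delta_pos by simp
  then show ?thesis unfolding gamma_def using right_prob_pos[of \<beta> "- margin"] by (simp add: mult_left_mono)
qed

lemma ascent_lb_pos: "ascent_lb f S > 0"
  unfolding ascent_lb_def using gamma_pos rho_prod_pos by simp

lemma ascent_lb_le_quarter: "ascent_lb f S \<le> 1 / 4"
proof -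
  have "gamma ^ ascents S * rho_prod (bounces f) \<le> 1"
    using gamma_pos gamma_le_1 rho_prod_pos[of "bounces f"] rho_prod_le_1[of "bounces f"]
    by (intro mult_le_one) (auto simp: power_le_one)
  then show ?thesis unfolding ascent_lb_def by simp
qed

lemma ascent_lb_ge:
  assumes "ascents S \<le> max_excursions"
  shows "ascent_lb f S \<ge> gamma ^ max_excursions * delta / 4"
proof -
  have "gamma ^ max_excursions * delta \<le> gamma ^ ascents S * rho_prod (bounces f)"
    using gamma_pos gamma_le_1 assms delta_pos rho_prod_ge_delta
    by (intro mult_mono power_decreasing) auto
  then show ?thesis unfolding ascent_lb_def by simp
qed

lemma mid_lb_pos: "mid_lb > 0"
  unfolding mid_lb_def using right_prob_pos gamma_pos delta_pos by simp

lemma descent_rate_pos: "descent_rate > 0"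
  unfolding descent_rate_def using mid_lb_pos delta_pos by simp

lemma descent_rate_le: "descent_rate \<le> 1 / 8" "descent_rate \<le> mid_lb / 2" "descent_rate \<le> delta / 2"
  unfolding descent_rate_def by auto

lemma descent_rate_power_le_1: "descent_rate ^ n \<le> 1"
  using descent_rate_pos descent_rate_le(1) by (simp add: power_le_one)

lemma hit_min_pos: "hit_min > 0"
  unfolding hit_min_def using delta_pos gamma_pos mid_lb_pos descent_rate_pos by simp

lemma hit_min_le:
  "hit_min \<le> delta / 2" "hit_min \<le> gamma ^ max_excursions * delta / 4" "hit_min \<le> mid_lb"
  "hit_min \<le> descent_rate ^ max_excursions / 2"
  unfolding hit_min_def by auto

lemma eps_pos: "eps > 0"
  unfolding eps_def using hit_min_pos by simp

lemma eps_le: "eps \<le> 1 / 4"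
  unfolding eps_def using hit_min_le(1) delta_le_1 by simp

lemma theta_gt_1: "theta > 1"
  unfolding theta_def using eps_pos eps_le by (simp add: field_simps)

lemma theta_mult: "theta * (1 - eps) = 1"
  unfolding theta_def using eps_le by simp

lemma ascents_add_eta: "ascents (S + eta) = ascents S - 1"
proof -
  have "(C + 1 - (S + eta)) / eta = (C + 1 - S) / eta - 1" using eta_pos by (simp add: field_simps)
  then have "\<lceil>(C + 1 - (S + eta)) / eta\<rceil> = \<lceil>(C + 1 - S) / eta\<rceil> - 1" by simp
  then show ?thesis unfolding ascents_def by linarith
qed

lemma descents_diff_eta: "descents (S - eta) = descents S - 1"
proof -
  have "(S - eta + C + 1) / eta = (S + C + 1) / eta - 1" using eta_pos by (simp add: field_simps)
  then have "\<lceil>(S - eta + C + 1) / eta\<rceil> = \<lceil>(S + C + 1) / eta\<rceil> - 1" by simp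
  then show ?thesis unfolding descents_def by linarith
qed

lemma ascents_ge_1: "S < C + 1 \<Longrightarrow> ascents S \<ge> 1"
proof -
  assume "S < C + 1"
  then have "(C + 1 - S) / eta > 0" using eta_pos by simp
  then show ?thesis unfolding ascents_def by linarith
qed

lemma descents_ge_1: "S > - C - 1 \<Longrightarrow> descents S \<ge> 1"
proof -
  assume "S > - C - 1"
  then have "(S + C + 1) / eta > 0" using eta_pos by simp
  then show ?thesis unfolding descents_def by linarith
qed

lemma ascents_le_max: "S > - C - 1 \<Longrightarrow> ascents S \<le> max_excursions"
  unfolding ascents_def max_excursions_def using eta_pos
  by (intro nat_mono ceiling_mono divide_right_mono) auto

lemma descents_le_max: "S < C + 1 \<Longrightarrow> descents S \<le> max_excursions"
  unfolding descents_def max_excursions_def using eta_pos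
  by (intro nat_mono ceiling_mono divide_right_mono) auto

lemma bounces_eq_0: "f \<ge> - margin \<Longrightarrow> bounces f = 0"
  unfolding bounces_def by simp

lemma bounces_le_1: "f \<ge> - margin - 2 \<Longrightarrow> bounces f \<le> 1"
  unfolding bounces_def by (simp add: nat_le_iff ceiling_le_iff)

lemma bounces_add_2: "bounces (f + 2) = bounces f - 1"
proof -
  have "\<lceil>(- margin - (f + 2)) / 2\<rceil> = \<lceil>(- margin - f) / 2 - 1\<rceil>" by (simp add: field_simps)
  then show ?thesis unfolding bounces_def by (simp add: nat_diff_distrib')
qed

lemma bounces_lt:
  assumes "f < - margin"
  shows "bounces f \<ge> 1" "2 * real (bounces f - 1) < - margin - f"
proof -
  define c where "c = \<lceil>(- margin - f) / 2\<rceil>"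
  have c: "0 < c" "of_int c - 1 < (- margin - f) / 2"
    unfolding c_def using assms ceiling_correct[of "(- margin - f) / 2"] by auto
  have bounces: "bounces f = nat c" unfolding bounces_def c_def ..
  show "bounces f \<ge> 1" using c(1) bounces by linarith
  have "real (bounces f - 1) = of_int c - 1" using bounces c(1) by (simp add: of_nat_diff)
  then show "2 * real (bounces f - 1) < - margin - f" using c(2) by simp
qed

text \<open>The states \<open>(q, d, f)\<close> = (position, \<open>D1\<close>, \<open>D2\<close>) in which neither event (a) nor
  event (b) happens. The last two clauses are invariants which, as we show later, hold for
  all large times once the walk is confined to \<open>{x..x + 3}\<close>.\<close>

definition admissible :: "int \<Rightarrow> real \<Rightarrow> real \<Rightarrow> bool" where
  "admissible q d f \<longleftrightarrow> x \<le> q \<and> q \<le> x + 3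
     \<and> \<not> (q = x + 1 \<and> d \<le> - C \<and> d + f \<le> - C)
     \<and> \<not> (q = x + 2 \<and> f \<ge> C \<and> d + f \<ge> C)
     \<and> (q = x + 2 \<and> d + f \<le> - C - 1 \<longrightarrow> d > - C - 1)
     \<and> (q = x + 1 \<and> d + f \<ge> C + 1 \<longrightarrow> f < C + 1)"

text \<open>At the two middle sites, a lower bound for the probability that an event (a) or (b)
  is forced along the routes described at the beginning; each branch corresponds to one route.\<close>

definition hit_lb :: "int \<Rightarrow> real \<Rightarrow> real \<Rightarrow> real" where
  "hit_lb q d f = (if q = x + 1 then
      (if d + f \<le> - C - 1 then min (1 / 2) (bounce_lb d)
       else if d + f \<ge> C + 1 then bounce_lb2 (- f) (- (d + f))
       else if d < - margin then descent_rate ^ descents (d + f) / 2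
       else min (1 / 2) (up d * ascent_lb (f + 1) (d + f)))
    else (if d + f \<le> - C - 1 then bounce_lb2 d (d + f)
          else if d + f \<ge> C + 1 then min (1 / 2) (bounce_lb (- f))
          else ascent_lb f (d + f)))"

definition hit_lb_ext :: "int \<Rightarrow> real \<Rightarrow> real \<Rightarrow> real" where
  "hit_lb_ext q d f = (if admissible q d f then hit_lb q d f else 1)"

text \<open>At \<open>x\<close> the potential is rescaled so that the factor \<open>theta\<close> paid for each crossing
  \<open>x \<rightarrow> x + 1\<close> is absorbed (see \<open>theta_mult\<close>).\<close>

definition potential :: "int \<Rightarrow> real \<Rightarrow> real \<Rightarrow> real" where
  "potential q d f =
     (if q = x then max 0 (theta * (min (1 / 2) (hit_lb_ext (x + 1) (d + 1) (f - \<alpha>)) - eps))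
      else if q = x + 3 then min (1 / 2) (hit_lb_ext (x + 2) (d + \<alpha>) (f - 1))
      else hit_lb q d f)"

lemma hit_lb_le_half: "hit_lb q d f \<le> 1 / 2"
  using bounce_lb2_le_half[of d "d + f"] bounce_lb2_le_half[of "- f" "- (d + f)"]
    ascent_lb_le_quarter[of f "d + f"] ascent_lb_pos[of f "d + f"]
    descent_rate_power_le_1[of "descents (d + f)"]
  unfolding hit_lb_def by auto

lemma hit_lb_nonneg: "hit_lb q d f \<ge> 0"
  unfolding hit_lb_def using bounce_lb_pos bounce_lb2_nonneg ascent_lb_pos descent_rate_pos right_prob_pos
  by (auto intro!: mult_nonneg_nonneg simp: less_imp_le)

lemma hit_lb_ext_nonneg: "hit_lb_ext q d f \<ge> 0"
  unfolding hit_lb_ext_def using hit_lb_nonneg by auto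

lemma mid_lb_le_hit_lb_x1:
  assumes "- C - 1 < d + f" "d + f < C + 1" "d \<ge> - margin"
  shows "mid_lb \<le> hit_lb (x + 1) d f"
proof -
  have "up (- margin) * (gamma ^ max_excursions * delta / 4) \<le> up d * ascent_lb (f + 1) (d + f)"
    using assms right_prob_pos gamma_pos delta_pos ascent_lb_ge ascents_le_max
    by (intro mult_mono up_mono) (auto simp: less_imp_le)
  then have "mid_lb \<le> min (1 / 2) (up d * ascent_lb (f + 1) (d + f))"
    unfolding mid_lb_def by (simp add: mult.assoc min.coboundedI2)
  then show ?thesis unfolding hit_lb_def using assms C_pos by auto
qed

lemma hit_min_le_hit_lb_x1:
  assumes "admissible (x + 1) d f"
  shows "hit_min \<le> hit_lb (x + 1) d f"
proof -
  consider (low) "d + f \<le> - C - 1" | (high) "d + f \<ge> C + 1" | (far) "- C - 1 < d + f" "d + f < C + 1" "d < - margin"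
    | (mid) "- C - 1 < d + f" "d + f < C + 1" "d \<ge> - margin"
    by linarith
  then show ?thesis
  proof cases
    case low
    then have "d > - C" using assms unfolding admissible_def by auto
    then show ?thesis
      using low hit_min_le(1) bounce_lb_ge_delta[of d] bounce_lb_le_half delta_le_1 delta_pos
      unfolding hit_lb_def by auto
  next
    case high
    then have "delta / 2 \<le> bounce_lb2 (- f) (- (d + f))"
      using assms unfolding admissible_def by (intro bounce_lb2_ge) auto
    then show ?thesis using high hit_min_le(1) C_pos unfolding hit_lb_def by auto
  next
    case far
    have "descent_rate ^ max_excursions \<le> descent_rate ^ descents (d + f)"
      using descents_le_max far descent_rate_pos descent_rate_le(1) by (intro power_decreasing) auto
    then show ?thesis using far hit_min_le(4) unfolding hit_lb_def by auto
  next
    case mid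
    then show ?thesis using mid_lb_le_hit_lb_x1[of d f] hit_min_le(3) by linarith
  qed
qed

lemma hit_min_le_hit_lb_x2:
  assumes "admissible (x + 2) d f"
  shows "hit_min \<le> hit_lb (x + 2) d f"
proof -
  consider (low) "d + f \<le> - C - 1" | (high) "d + f \<ge> C + 1" | (mid) "- C - 1 < d + f" "d + f < C + 1"
    by linarith
  then show ?thesis
  proof cases
    case low
    then have "delta / 2 \<le> bounce_lb2 d (d + f)"
      using assms unfolding admissible_def by (intro bounce_lb2_ge) auto
    then show ?thesis using low hit_min_le(1) unfolding hit_lb_def by auto
  next
    case high
    then show ?thesis
      using hit_min_le(1) bounce_lb_ge_delta[of "- f"] delta_le_1 delta_pos C_pos unfolding hit_lb_def by auto
  next
    case mid
    then have "hit_lb (x + 2) d f = ascent_lb f (d + f)" unfolding hit_lb_def by simp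
    then show ?thesis using mid hit_min_le(2) ascent_lb_ge[OF ascents_le_max, of "d + f" f] by simp
  qed
qed

lemma hit_lb_ext_cases:
  assumes "q = x + 1 \<or> q = x + 2"
  shows "hit_lb_ext q d f = 1 \<or> 2 * eps \<le> hit_lb_ext q d f \<and> hit_lb_ext q d f \<le> 1 / 2"
  using assms hit_min_le_hit_lb_x1[of d f] hit_min_le_hit_lb_x2[of d f] hit_lb_le_half[of q d f]
  unfolding hit_lb_ext_def eps_def by auto

lemma two_eps_le_min_hit_lb_ext:
  "q = x + 1 \<or> q = x + 2 \<Longrightarrow> 2 * eps \<le> min (1 / 2) (hit_lb_ext q d f)"
  using hit_lb_ext_cases[of q d f] eps_le by auto

lemma potential_nonneg: "potential q d f \<ge> 0"
  unfolding potential_def using hit_lb_ext_nonneg hit_lb_nonneg by auto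

lemma potential_le_half: "potential q d f \<le> 1 / 2"
proof -
  have "theta * (min (1 / 2) (hit_lb_ext (x + 1) (d + 1) (f - \<alpha>)) - eps) \<le> theta * (1 / 2 - eps)"
    using theta_gt_1 by (intro mult_left_mono) auto
  also have "\<dots> = (1 / 2 - eps) / (1 - eps)" unfolding theta_def by simp
  also have "\<dots> \<le> 1 / 2" using eps_pos eps_le by (simp add: field_simps)
  finally show ?thesis unfolding potential_def using hit_lb_le_half by auto
qed

lemma potential_x_ge: "potential x d f \<ge> min (1 / 2) (hit_lb_ext (x + 1) (d + 1) (f - \<alpha>)) / 2"
proof -
  let ?m = "min (1 / 2) (hit_lb_ext (x + 1) (d + 1) (f - \<alpha>))"
  have m: "2 * eps \<le> ?m" by (rule two_eps_le_min_hit_lb_ext) simp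
  have "?m / 2 \<le> 1 * (?m - eps)" using m by simp
  also have "\<dots> \<le> theta * (?m - eps)" using theta_gt_1 m eps_pos by (intro mult_right_mono) auto
  finally show ?thesis unfolding potential_def by simp
qed

section \<open>Superharmonicity of the potential\<close>

lemma le_hit_lb_ext:
  assumes "c \<le> 1" "admissible q d f \<Longrightarrow> c \<le> hit_lb q d f"
  shows "c \<le> hit_lb_ext q d f"
  using assms unfolding hit_lb_ext_def by simp

lemma up_mult_mono: "a \<le> b \<Longrightarrow> up D * a \<le> up D * b"
  using right_prob_pos[of \<beta> D] by (intro mult_left_mono) auto

lemma hit_lb_x1_low:
  assumes "admissible (x + 1) d f" "d + f \<le> - C - 1"
  shows "hit_lb (x + 1) d f \<le> up d * hit_lb_ext (x + 2) (d - 1) (f + 1)"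
proof -
  have d: "d > - C" using assms unfolding admissible_def by auto
  then have "admissible (x + 2) (d - 1) (f + 1)" using assms(2) C_pos unfolding admissible_def by auto
  then have "hit_lb_ext (x + 2) (d - 1) (f + 1) = bounce_lb2 (d - 1) (d + f)"
    using assms(2) unfolding hit_lb_ext_def hit_lb_def by simp
  moreover have "hit_lb (x + 1) d f \<le> bounce_lb d" using assms(2) unfolding hit_lb_def by simp
  ultimately show ?thesis using bounce_lb_le_up_mult_bounce_lb2[OF d assms(2)] by simp
qed

lemma hit_lb_x1_high:
  assumes "d + f \<ge> C + 1"
  shows "hit_lb (x + 1) d f \<le> up d * hit_lb_ext (x + 2) (d - 1) (f + 1)"
proof -
  define Y where "Y = (if - f - 1 > - C then bounce_lb (- f - 1) else 1)"
  have "hit_lb (x + 1) d f = bounce_lb2 (- f) (- (d + f))" using assms C_pos unfolding hit_lb_def by simp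
  also have "\<dots> \<le> up d * Y" using bounce_lb2_le[of "- f" "- (d + f)"] unfolding Y_def by simp
  also have "\<dots> \<le> up d * hit_lb_ext (x + 2) (d - 1) (f + 1)"
  proof (intro up_mult_mono le_hit_lb_ext)
    show "Y \<le> 1" unfolding Y_def using bounce_lb_le_1 by simp
    assume "admissible (x + 2) (d - 1) (f + 1)"
    then have "- f - 1 > - C" using assms unfolding admissible_def by auto
    then show "Y \<le> hit_lb (x + 2) (d - 1) (f + 1)"
      using assms C_pos bounce_lb_le_half unfolding Y_def hit_lb_def by simp
  qed
  finally show ?thesis .
qed

lemma hit_lb_x1_mid:
  assumes "- C - 1 < d + f" "d + f < C + 1" "d \<ge> - margin"
  shows "hit_lb (x + 1) d f \<le> up d * hit_lb_ext (x + 2) (d - 1) (f + 1)"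
proof -
  have "hit_lb (x + 1) d f \<le> up d * ascent_lb (f + 1) (d + f)" using assms unfolding hit_lb_def by simp
  also have "\<dots> \<le> up d * hit_lb_ext (x + 2) (d - 1) (f + 1)"
    using assms ascent_lb_le_quarter[of "f + 1" "d + f"]
    by (intro up_mult_mono le_hit_lb_ext) (auto simp: hit_lb_def)
  finally show ?thesis .
qed

text \<open>The excursion \<open>x + 1 \<rightarrow> x \<rightarrow> x + 1\<close> leads from \<open>(x + 1, d, f)\<close> to
  \<open>(x + 1, d + 2, f - 2 * \<alpha>)\<close>; far to the left, this improves the bound by a factor of at least
  \<open>1 / (4 * descent_rate)\<close>.\<close>

lemma descent_rate_power_le_hit_lb_ext:
  assumes "- C - 1 < d + f" "d + f < C + 1" "d < - margin"
  shows "2 * descent_rate ^ descents (d + f) \<le> min (1 / 2) (hit_lb_ext (x + 1) (d + 2) (f - 2 * \<alpha>))"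
proof -
  define n where "n = descents (d + f) - 1"
  have n: "descents (d + f) = Suc n" unfolding n_def using descents_ge_1[OF assms(1)] by simp
  have shift: "d + 2 + (f - 2 * \<alpha>) = d + f - eta" unfolding eta_def by simp
  have "2 * descent_rate ^ Suc n \<le> 2 * descent_rate"
    using descent_rate_pos descent_rate_power_le_1[of n] by (simp add: mult_left_le)
  then have small: "2 * descent_rate ^ Suc n \<le> 1 / 4" using descent_rate_le(1) by simp
  have "2 * descent_rate ^ Suc n \<le> hit_lb_ext (x + 1) (d + 2) (f - 2 * \<alpha>)"
  proof (rule le_hit_lb_ext)
    show "2 * descent_rate ^ Suc n \<le> 1" using small by simp
    consider (low) "d + f - eta \<le> - C - 1" | (far) "- C - 1 < d + f - eta" "d + 2 < - margin"
      | (mid) "- C - 1 < d + f - eta" "d + 2 \<ge> - margin"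
      by linarith
    then show "2 * descent_rate ^ Suc n \<le> hit_lb (x + 1) (d + 2) (f - 2 * \<alpha>)"
    proof cases
      case low
      then have "hit_lb (x + 1) (d + 2) (f - 2 * \<alpha>) = min (1 / 2) (bounce_lb (d + 2))"
        unfolding hit_lb_def shift by simp
      moreover have "2 * descent_rate ^ Suc n \<le> bounce_lb (d + 2)"
        using \<open>2 * descent_rate ^ Suc n \<le> 2 * descent_rate\<close> descent_rate_le(3)
          bounce_lb_ge_delta[of "d + 2"] by linarith
      ultimately show ?thesis using small by simp
    next
      case far
      have "d + f - eta < C + 1" using assms(2) eta_pos by simp
      then have "hit_lb (x + 1) (d + 2) (f - 2 * \<alpha>) = descent_rate ^ n / 2"
        using far unfolding hit_lb_def shift descents_diff_eta n by simp
      moreover have "descent_rate * descent_rate ^ n \<le> 1 / 8 * descent_rate ^ n"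
        using descent_rate_le(1) less_imp_le[OF descent_rate_pos] by (intro mult_right_mono) auto
      moreover have "0 \<le> descent_rate ^ n" using descent_rate_pos by simp
      ultimately show ?thesis by simp
    next
      case mid
      have "d + f - eta < C + 1" using assms(2) eta_pos by simp
      then have "mid_lb \<le> hit_lb (x + 1) (d + 2) (f - 2 * \<alpha>)"
        using mid by (intro mid_lb_le_hit_lb_x1) (auto simp: shift)
      then show ?thesis using descent_rate_le(2) \<open>2 * descent_rate ^ Suc n \<le> 2 * descent_rate\<close> by simp
    qed
  qed
  then show ?thesis using small n by simp
qed

lemma hit_lb_x1_far:
  assumes "- C - 1 < d + f" "d + f < C + 1" "d < - margin"
  shows "hit_lb (x + 1) d f \<le> up (- d) * potential x (d + 1) (f - \<alpha>)"
proof -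
  let ?m = "min (1 / 2) (hit_lb_ext (x + 1) (d + 2) (f - 2 * \<alpha>))"
  have "hit_lb (x + 1) d f = descent_rate ^ descents (d + f) / 2" using assms unfolding hit_lb_def by simp
  also have "\<dots> \<le> 1 / 2 * (?m / 2)" using descent_rate_power_le_hit_lb_ext[OF assms] by simp
  also have "\<dots> \<le> up (- d) * potential x (d + 1) (f - \<alpha>)"
  proof (rule mult_mono)
    show "1 / 2 \<le> up (- d)" using assms(3) margin_pos by (intro up_ge_half) simp
    have eq: "d + 1 + 1 = d + 2" "f - \<alpha> - \<alpha> = f - 2 * \<alpha>" by simp_all
    show "?m / 2 \<le> potential x (d + 1) (f - \<alpha>)" using potential_x_ge[of "d + 1" "f - \<alpha>", unfolded eq] .
  qed (use right_prob_pos[of \<beta> "- d"] hit_lb_ext_nonneg[of "x + 1" "d + 2" "f - 2 * \<alpha>"] in auto)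
  finally show ?thesis .
qed

lemma hit_lb_x1_superharmonic:
  assumes "admissible (x + 1) d f"
  shows "hit_lb (x + 1) d f
           \<le> up d * hit_lb_ext (x + 2) (d - 1) (f + 1) + up (- d) * potential x (d + 1) (f - \<alpha>)"
proof -
  let ?right = "up d * hit_lb_ext (x + 2) (d - 1) (f + 1)"
  let ?left = "up (- d) * potential x (d + 1) (f - \<alpha>)"
  consider "d + f \<le> - C - 1" | "d + f \<ge> C + 1" | "- C - 1 < d + f" "d + f < C + 1" "d \<ge> - margin"
    | "- C - 1 < d + f" "d + f < C + 1" "d < - margin"
    by linarith
  then have "hit_lb (x + 1) d f \<le> ?right \<or> hit_lb (x + 1) d f \<le> ?left"
  proof cases
    case 1
    then show ?thesis using hit_lb_x1_low[OF assms] by blast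
  next
    case 2
    then show ?thesis using hit_lb_x1_high by blast
  next
    case 3
    then show ?thesis using hit_lb_x1_mid by blast
  next
    case 4
    then show ?thesis using hit_lb_x1_far by blast
  qed
  moreover have "0 \<le> ?right" "0 \<le> ?left"
    using right_prob_pos hit_lb_ext_nonneg potential_nonneg by (simp_all add: less_imp_le)
  ultimately show ?thesis by linarith
qed

lemma hit_lb_x2_low:
  assumes "admissible (x + 2) d f" "d + f \<le> - C - 1"
  shows "hit_lb (x + 2) d f \<le> up (- f) * hit_lb_ext (x + 1) (d - 1) (f + 1)"
proof -
  define Y where "Y = (if d - 1 > - C then bounce_lb (d - 1) else 1)"
  have "hit_lb (x + 2) d f = bounce_lb2 d (d + f)" using assms(2) unfolding hit_lb_def by simp
  also have "\<dots> \<le> up (- f) * Y" using bounce_lb2_le[of d "d + f"] unfolding Y_def by simp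
  also have "\<dots> \<le> up (- f) * hit_lb_ext (x + 1) (d - 1) (f + 1)"
  proof (intro up_mult_mono le_hit_lb_ext)
    show "Y \<le> 1" unfolding Y_def using bounce_lb_le_1 by simp
    assume "admissible (x + 1) (d - 1) (f + 1)"
    then have "d - 1 > - C" using assms(2) unfolding admissible_def by auto
    then show "Y \<le> hit_lb (x + 1) (d - 1) (f + 1)"
      using assms(2) bounce_lb_le_half unfolding Y_def hit_lb_def by simp
  qed
  finally show ?thesis .
qed

lemma hit_lb_x2_high:
  assumes "admissible (x + 2) d f" "d + f \<ge> C + 1"
  shows "hit_lb (x + 2) d f \<le> up (- f) * hit_lb_ext (x + 1) (d - 1) (f + 1)"
proof -
  have f: "- f > - C" using assms C_pos unfolding admissible_def by auto
  have S: "- (d + f) \<le> - C - 1" using assms(2) by simp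
  have "admissible (x + 1) (d - 1) (f + 1)" using assms f C_pos unfolding admissible_def by auto
  moreover have "d - 1 + (f + 1) = d + f" "- (f + 1) = - f - 1" by simp_all
  ultimately have "hit_lb_ext (x + 1) (d - 1) (f + 1) = bounce_lb2 (- f - 1) (- (d + f))"
    using assms(2) C_pos unfolding hit_lb_ext_def hit_lb_def by simp
  moreover have "hit_lb (x + 2) d f \<le> bounce_lb (- f)" using assms(2) C_pos unfolding hit_lb_def by simp
  ultimately show ?thesis using bounce_lb_le_up_mult_bounce_lb2[OF f S] by simp
qed

lemma hit_lb_x2_far:
  assumes "- C - 1 < d + f" "d + f < C + 1" "f < - margin"
  shows "hit_lb (x + 2) d f \<le> up (- f) * hit_lb_ext (x + 1) (d - 1) (f + 1)"
proof -
  define j where "j = bounces f - 1"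
  have j: "bounces f = Suc j" "2 * real j < - margin - f" unfolding j_def using bounces_lt[OF assms(3)] by auto
  have d: "d - 1 \<ge> - margin" using assms(1,3) C_pos unfolding margin_def by simp
  have "admissible (x + 1) (d - 1) (f + 1)" using assms C_pos unfolding admissible_def margin_def by auto
  then have target: "hit_lb_ext (x + 1) (d - 1) (f + 1) = min (1 / 2) (up (d - 1) * ascent_lb (f + 2) (d + f))"
    using assms d unfolding hit_lb_ext_def hit_lb_def by (simp add: algebra_simps)
  have "hit_lb (x + 2) d f = rho j * (gamma ^ ascents (d + f) / 4 * rho_prod j)"
    using assms(1,2) unfolding hit_lb_def ascent_lb_def j(1) rho_prod_Suc by simp
  also have "\<dots> \<le> (up (- f) * up (d - 1)) * (gamma ^ ascents (d + f) / 4 * rho_prod j)"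
    using j(2) assms margin_pos C_pos gamma_pos rho_prod_pos[of j]
    by (intro mult_right_mono rho_le_up_mult_up) (auto simp: margin_def)
  also have "\<dots> = up (- f) * (up (d - 1) * ascent_lb (f + 2) (d + f))"
    unfolding ascent_lb_def bounces_add_2 j(1) by simp
  finally have "hit_lb (x + 2) d f \<le> up (- f) * (up (d - 1) * ascent_lb (f + 2) (d + f))" .
  moreover have "hit_lb (x + 2) d f \<le> up (- f) * (1 / 2)"
    using assms ascent_lb_le_quarter[of f "d + f"] up_ge_half[of "- f"] margin_pos
    unfolding hit_lb_def by simp
  ultimately show ?thesis
    unfolding target min_mult_distrib_left using right_prob_pos[of \<beta> "- f"] by simp
qed

text \<open>The excursion \<open>x + 2 \<rightarrow> x + 3 \<rightarrow> x + 2\<close> leads from \<open>(x + 2, d, f)\<close> to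
  \<open>(x + 2, d + 2 * \<alpha>, f - 2)\<close> and costs at most a factor \<open>gamma\<close>.\<close>

lemma gamma_power_le_hit_lb_ext:
  assumes "- C - 1 < d + f" "d + f < C + 1" "f \<ge> - margin"
  shows "gamma ^ ascents (d + f) / 4 \<le> up (- margin) * min (1 / 2) (hit_lb_ext (x + 2) (d + 2 * \<alpha>) (f - 2))"
proof -
  define k where "k = ascents (d + f) - 1"
  have k: "ascents (d + f) = Suc k" unfolding k_def using ascents_ge_1[OF assms(2)] by simp
  have shift: "d + 2 * \<alpha> + (f - 2) = d + f + eta" unfolding eta_def by simp
  have up_pos: "up (- margin) > 0" by (rule right_prob_pos)
  have "gamma ^ ascents (d + f) / 4 \<le> gamma / 4"
    unfolding k using gamma_pos gamma_le_1 by (simp add: mult_left_le power_le_one)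
  also have "\<dots> \<le> up (- margin) * (delta / 2)" unfolding gamma_def using up_pos delta_pos by simp
  finally have via_delta: "gamma ^ ascents (d + f) / 4 \<le> up (- margin) * (delta / 2)" .
  consider (out) "\<not> admissible (x + 2) (d + 2 * \<alpha>) (f - 2)"
    | (high) "admissible (x + 2) (d + 2 * \<alpha>) (f - 2)" "d + f + eta \<ge> C + 1"
    | (mid) "admissible (x + 2) (d + 2 * \<alpha>) (f - 2)" "d + f + eta < C + 1"
    by linarith
  then show ?thesis
  proof cases
    case out
    have "up (- margin) * (delta / 2) \<le> up (- margin) * (1 / 2)"
      using delta_le_1 by (intro up_mult_mono) simp
    then show ?thesis using out via_delta unfolding hit_lb_ext_def by simp
  next
    case high
    then have "hit_lb_ext (x + 2) (d + 2 * \<alpha>) (f - 2) = min (1 / 2) (bounce_lb (- (f - 2)))"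
      using assms(1) eta_pos unfolding hit_lb_ext_def hit_lb_def shift by simp
    then have "delta / 2 \<le> min (1 / 2) (hit_lb_ext (x + 2) (d + 2 * \<alpha>) (f - 2))"
      using bounce_lb_ge_delta[of "- (f - 2)"] delta_le_1 delta_pos by simp
    then show ?thesis using via_delta up_mult_mono order_trans by blast
  next
    case mid
    have "rho_prod 1 \<le> rho_prod (bounces (f - 2))"
      using assms(3) by (intro rho_prod_antimono bounces_le_1) simp
    then have rho_0: "rho 0 \<le> rho_prod (bounces (f - 2))" by (simp add: rho_prod_def)
    have "hit_lb_ext (x + 2) (d + 2 * \<alpha>) (f - 2) = gamma ^ k / 4 * rho_prod (bounces (f - 2))"
      using mid assms(1) eta_pos
      unfolding hit_lb_ext_def hit_lb_def shift ascent_lb_def ascents_add_eta k by simp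
    then have target: "min (1 / 2) (hit_lb_ext (x + 2) (d + 2 * \<alpha>) (f - 2)) = gamma ^ k / 4 * rho_prod (bounces (f - 2))"
      using hit_lb_le_half[of "x + 2" "d + 2 * \<alpha>" "f - 2"] mid(1) unfolding hit_lb_ext_def by (simp add: min_def)
    have "gamma ^ ascents (d + f) / 4 = gamma * (gamma ^ k / 4)" unfolding k by simp
    also have "\<dots> \<le> (up (- margin) * rho 0) * (gamma ^ k / 4)"
      using gamma_le_up_rho_0 gamma_pos by (intro mult_right_mono) auto
    also have "\<dots> \<le> up (- margin) * (gamma ^ k / 4 * rho_prod (bounces (f - 2)))"
      using rho_0 up_pos gamma_pos by (simp add: mult_left_mono mult.assoc mult.left_commute)
    finally show ?thesis unfolding target .
  qed
qed

lemma hit_lb_x2_near: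
  assumes "- C - 1 < d + f" "d + f < C + 1" "f \<ge> - margin"
  shows "hit_lb (x + 2) d f \<le> up f * potential (x + 3) (d + \<alpha>) (f - 1)"
proof -
  have "hit_lb (x + 2) d f = gamma ^ ascents (d + f) / 4"
    using assms bounces_eq_0 unfolding hit_lb_def ascent_lb_def by (simp add: rho_prod_def)
  also have "\<dots> \<le> up (- margin) * min (1 / 2) (hit_lb_ext (x + 2) (d + 2 * \<alpha>) (f - 2))"
    by (rule gamma_power_le_hit_lb_ext[OF assms])
  also have "\<dots> \<le> up f * min (1 / 2) (hit_lb_ext (x + 2) (d + 2 * \<alpha>) (f - 2))"
    using assms(3) hit_lb_ext_nonneg by (intro mult_right_mono up_mono) auto
  also have eq: "d + \<alpha> + \<alpha> = d + 2 * \<alpha>" "f - 1 - 1 = f - 2" by simp_all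
  then have "min (1 / 2) (hit_lb_ext (x + 2) (d + 2 * \<alpha>) (f - 2)) = potential (x + 3) (d + \<alpha>) (f - 1)"
    unfolding potential_def eq by simp
  finally show ?thesis .
qed

lemma hit_lb_x2_superharmonic:
  assumes "admissible (x + 2) d f"
  shows "hit_lb (x + 2) d f
           \<le> up f * potential (x + 3) (d + \<alpha>) (f - 1) + up (- f) * hit_lb_ext (x + 1) (d - 1) (f + 1)"
proof -
  let ?right = "up f * potential (x + 3) (d + \<alpha>) (f - 1)"
  let ?left = "up (- f) * hit_lb_ext (x + 1) (d - 1) (f + 1)"
  consider "d + f \<le> - C - 1" | "d + f \<ge> C + 1" | "- C - 1 < d + f" "d + f < C + 1" "f < - margin"
    | "- C - 1 < d + f" "d + f < C + 1" "f \<ge> - margin"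
    by linarith
  then have "hit_lb (x + 2) d f \<le> ?right \<or> hit_lb (x + 2) d f \<le> ?left"
  proof cases
    case 1
    then show ?thesis using hit_lb_x2_low[OF assms] by blast
  next
    case 2
    then show ?thesis using hit_lb_x2_high[OF assms] by blast
  next
    case 3
    then show ?thesis using hit_lb_x2_far by blast
  next
    case 4
    then show ?thesis using hit_lb_x2_near by blast
  qed
  moreover have "0 \<le> ?right" "0 \<le> ?left"
    using right_prob_pos hit_lb_ext_nonneg potential_nonneg by (simp_all add: less_imp_le)
  ultimately show ?thesis by linarith
qed

definition avoid :: "int \<Rightarrow> real \<Rightarrow> real \<Rightarrow> real" where
  "avoid q d f = (if admissible q d f then 1 - potential q d f else 0)"

lemma avoid_nonneg: "avoid q d f \<ge> 0"
  unfolding avoid_def using potential_le_half[of q d f] by simp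

lemma avoid_le_1: "avoid q d f \<le> 1"
  unfolding avoid_def using potential_nonneg by simp

lemma avoid_middle: "q = x + 1 \<or> q = x + 2 \<Longrightarrow> avoid q d f = 1 - hit_lb_ext q d f"
  unfolding avoid_def hit_lb_ext_def potential_def by auto

lemma avoid_step_x:
  assumes "0 \<le> P" "P \<le> 1"
  shows "P * theta * avoid (x + 1) (d + 1) (f - \<alpha>) \<le> avoid x d f"
proof -
  let ?g = "hit_lb_ext (x + 1) (d + 1) (f - \<alpha>)"
  have avoid_x: "avoid x d f = 1 - potential x d f" unfolding avoid_def admissible_def by simp
  consider "?g = 1" | "2 * eps \<le> ?g" "?g \<le> 1 / 2" using hit_lb_ext_cases[of "x + 1"] by auto
  then show ?thesis
  proof cases
    case 1
    then show ?thesis using avoid_middle[of "x + 1"] avoid_nonneg[of x d f] by simp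
  next
    case 2
    then have "potential x d f = theta * (?g - eps)"
      unfolding potential_def using theta_gt_1 eps_pos by simp
    then have "avoid x d f = theta * (1 - ?g)" unfolding avoid_x using theta_mult by (simp add: algebra_simps)
    moreover have "P * theta * (1 - ?g) \<le> 1 * theta * (1 - ?g)"
      using assms 2 theta_gt_1 by (intro mult_right_mono) auto
    ultimately show ?thesis using avoid_middle[of "x + 1"] by simp
  qed
qed

lemma avoid_step_x1:
  assumes "admissible (x + 1) d f"
  shows "up d * avoid (x + 2) (d - 1) (f + 1) + up (- d) * avoid x (d + 1) (f - \<alpha>) \<le> avoid (x + 1) d f"
proof -
  let ?H = "hit_lb_ext (x + 2) (d - 1) (f + 1)" and ?G = "potential x (d + 1) (f - \<alpha>)"
  have left: "avoid x (d + 1) (f - \<alpha>) = 1 - ?G" unfolding avoid_def admissible_def by simp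
  have right: "avoid (x + 2) (d - 1) (f + 1) = 1 - ?H" by (rule avoid_middle) simp
  have "up d * avoid (x + 2) (d - 1) (f + 1) + up (- d) * avoid x (d + 1) (f - \<alpha>)
      = (up d + up (- d)) - (up d * ?H + up (- d) * ?G)"
    unfolding left right by (simp add: algebra_simps)
  also have "\<dots> \<le> 1 - hit_lb (x + 1) d f"
    using hit_lb_x1_superharmonic[OF assms] right_prob_add_neg[of \<beta> d] by simp
  also have "\<dots> = avoid (x + 1) d f" using assms unfolding avoid_def potential_def by simp
  finally show ?thesis .
qed

lemma avoid_step_x2:
  assumes "admissible (x + 2) d f"
  shows "up f * avoid (x + 3) (d + \<alpha>) (f - 1) + up (- f) * avoid (x + 1) (d - 1) (f + 1) \<le> avoid (x + 2) d f"
proof -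
  let ?H = "hit_lb_ext (x + 1) (d - 1) (f + 1)" and ?G = "potential (x + 3) (d + \<alpha>) (f - 1)"
  have right: "avoid (x + 3) (d + \<alpha>) (f - 1) = 1 - ?G" unfolding avoid_def admissible_def by simp
  have left: "avoid (x + 1) (d - 1) (f + 1) = 1 - ?H" by (rule avoid_middle) simp
  have "up f * avoid (x + 3) (d + \<alpha>) (f - 1) + up (- f) * avoid (x + 1) (d - 1) (f + 1)
      = (up f + up (- f)) - (up f * ?G + up (- f) * ?H)"
    unfolding left right by (simp add: algebra_simps)
  also have "\<dots> \<le> 1 - hit_lb (x + 2) d f"
    using hit_lb_x2_superharmonic[OF assms] right_prob_add_neg[of \<beta> f] by simp
  also have "\<dots> = avoid (x + 2) d f" using assms unfolding avoid_def potential_def by simp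
  finally show ?thesis .
qed

lemma avoid_step_x3:
  assumes "0 \<le> P" "P \<le> 1"
  shows "P * avoid (x + 2) (d + \<alpha>) (f - 1) \<le> avoid (x + 3) d f"
proof -
  let ?g = "hit_lb_ext (x + 2) (d + \<alpha>) (f - 1)"
  have "avoid (x + 3) d f = 1 - min (1 / 2) ?g" unfolding avoid_def admissible_def potential_def by simp
  moreover have "P * (1 - ?g) \<le> 1 * (1 - ?g)" if "?g \<le> 1" using assms that by (intro mult_right_mono) auto
  ultimately show ?thesis using avoid_middle[of "x + 2"] hit_lb_ext_cases[of "x + 2" "d + \<alpha>" "f - 1"] by auto
qed

text \<open>A step from \<open>q\<close> to \<open>q \<plusminus> 1\<close> traverses
  the edge \<open>max q (q \<plusminus> 1)\<close>, which shifts \<open>D1\<close> and \<open>D2\<close> by the corresponding increments.\<close>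

lemma avoid_superharmonic:
  assumes adm: "admissible q d f" and P: "0 \<le> P" "P \<le> 1"
    and P_x1: "q = x + 1 \<Longrightarrow> P = up d" and P_x2: "q = x + 2 \<Longrightarrow> P = up f"
  shows "P * (if q = x then theta else 1)
           * avoid (q + 1) (d + Delta_increment \<alpha> (x + 1) (q + 1)) (f + Delta_increment \<alpha> (x + 2) (q + 1))
         + (1 - P) * avoid (q - 1) (d + Delta_increment \<alpha> (x + 1) q) (f + Delta_increment \<alpha> (x + 2) q)
         \<le> avoid q d f"
    (is "P * ?factor * ?right + (1 - P) * ?left \<le> _")
proof -
  have "q = x \<or> q = x + 1 \<or> q = x + 2 \<or> q = x + 3" using adm unfolding admissible_def by auto
  then show ?thesis
  proof (elim disjE)
    assume q: "q = x"
    have "?right = avoid (x + 1) (d + 1) (f - \<alpha>)" using q by (simp add: Delta_increment_def)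
    moreover have "?left = 0" using q unfolding avoid_def admissible_def by simp
    ultimately show ?thesis using avoid_step_x[OF P, of d f] q by simp
  next
    assume q: "q = x + 1"
    have "?right = avoid (x + 2) (d - 1) (f + 1)" "?left = avoid x (d + 1) (f - \<alpha>)"
      using q by (simp_all add: Delta_increment_def algebra_simps)
    moreover have "1 - P = up (- d)" using P_x1 q right_prob_add_neg[of \<beta> d] by simp
    ultimately show ?thesis using avoid_step_x1[of d f] adm P_x1 q by simp
  next
    assume q: "q = x + 2"
    have "?right = avoid (x + 3) (d + \<alpha>) (f - 1)" "?left = avoid (x + 1) (d - 1) (f + 1)"
      using q by (simp_all add: Delta_increment_def algebra_simps)
    moreover have "1 - P = up (- f)" using P_x2 q right_prob_add_neg[of \<beta> f] by simp
    ultimately show ?thesis using avoid_step_x2[of d f] adm P_x2 q by simp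
  next
    assume q: "q = x + 3"
    have "?right = 0" using q unfolding avoid_def admissible_def by simp
    moreover have "?left = avoid (x + 2) (d + \<alpha>) (f - 1)"
      using q by (simp add: Delta_increment_def algebra_simps)
    moreover have "0 \<le> 1 - P" "1 - P \<le> 1" using P by simp_all
    ultimately show ?thesis using avoid_step_x3[of "1 - P" d f] q by simp
  qed
qed

section \<open>The supermartingale\<close>

definition D1 :: "(nat \<Rightarrow> int) \<Rightarrow> nat \<Rightarrow> real" where
  "D1 p k = Delta \<alpha> p k (x + 1)"

definition D2 :: "(nat \<Rightarrow> int) \<Rightarrow> nat \<Rightarrow> real" where
  "D2 p k = Delta \<alpha> p k (x + 2)"

definition admissible_at :: "(nat \<Rightarrow> int) \<Rightarrow> nat \<Rightarrow> bool" where
  "admissible_at p k \<longleftrightarrow> admissible (p k) (D1 p k) (D2 p k)"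

definition admissible_on :: "nat \<Rightarrow> (nat \<Rightarrow> int) \<Rightarrow> nat \<Rightarrow> bool" where
  "admissible_on T p n \<longleftrightarrow> (\<forall>k. T \<le> k \<and> k \<le> n \<longrightarrow> admissible_at p k)"

definition crossings :: "nat \<Rightarrow> (nat \<Rightarrow> int) \<Rightarrow> nat \<Rightarrow> nat" where
  "crossings T p n = card {j. T \<le> j \<and> j < n \<and> p j = x \<and> p (Suc j) = x + 1}"

definition supermart :: "nat \<Rightarrow> (nat \<Rightarrow> int) \<Rightarrow> nat \<Rightarrow> real" where
  "supermart T p n = (if n < T then 1
     else if admissible_on T p n then theta ^ crossings T p n * avoid (p n) (D1 p n) (D2 p n) else 0)"

lemma admissible_at_cong: "(\<And>i. i \<le> k \<Longrightarrow> p i = q i) \<Longrightarrow> admissible_at p k = admissible_at q k"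
  unfolding admissible_at_def D1_def D2_def using Delta_cong[of k p q] by auto

lemma admissible_on_cong:
  assumes "\<And>i. i \<le> N \<Longrightarrow> p i = q i"
  shows "admissible_on T p N = admissible_on T q N"
proof -
  have "admissible_at p k = admissible_at q k" if "k \<le> N" for k
    using that assms by (intro admissible_at_cong) auto
  then show ?thesis unfolding admissible_on_def by auto
qed

lemma crossings_cong: "(\<And>i. i \<le> N \<Longrightarrow> p i = q i) \<Longrightarrow> crossings T p N = crossings T q N"
proof -
  assume "\<And>i. i \<le> N \<Longrightarrow> p i = q i"
  then have "{j. T \<le> j \<and> j < N \<and> p j = x \<and> p (Suc j) = x + 1}
      = {j. T \<le> j \<and> j < N \<and> q j = x \<and> q (Suc j) = x + 1}"
    by (auto simp: Suc_le_eq)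
  then show ?thesis unfolding crossings_def by simp
qed

lemma crossings_eq_0: "n \<le> T \<Longrightarrow> crossings T p n = 0"
  unfolding crossings_def by (simp add: card_eq_0_iff)

lemma crossings_mono: "N \<le> N' \<Longrightarrow> crossings T p N \<le> crossings T p N'"
  unfolding crossings_def by (intro card_mono) auto

lemma D1_extend:
  "v = p N + 1 \<or> v = p N - 1
     \<Longrightarrow> D1 (p(Suc N := v)) (Suc N) = D1 p N + Delta_increment \<alpha> (x + 1) (max (p N) v)"
  unfolding D1_def by (rule Delta_extend)

lemma D2_extend:
  "v = p N + 1 \<or> v = p N - 1
     \<Longrightarrow> D2 (p(Suc N := v)) (Suc N) = D2 p N + Delta_increment \<alpha> (x + 2) (max (p N) v)"
  unfolding D2_def by (rule Delta_extend)

lemma admissible_on_extend: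
  "admissible_on T (p(Suc N := v)) (Suc N)
     \<longleftrightarrow> admissible_on T p N \<and> (T \<le> Suc N \<longrightarrow> admissible_at (p(Suc N := v)) (Suc N))"
proof -
  have "k \<le> N \<Longrightarrow> admissible_at (p(Suc N := v)) k = admissible_at p k" for k
    by (rule admissible_at_cong) auto
  then show ?thesis unfolding admissible_on_def by (auto simp: le_Suc_eq)
qed

lemma crossings_extend:
  "crossings T (p(Suc N := v)) (Suc N) = crossings T p N + (if T \<le> N \<and> p N = x \<and> v = x + 1 then 1 else 0)"
proof -
  have "{j. T \<le> j \<and> j < Suc N \<and> (p(Suc N := v)) j = x \<and> (p(Suc N := v)) (Suc j) = x + 1}
      = {j. T \<le> j \<and> j < N \<and> p j = x \<and> p (Suc j) = x + 1}
        \<union> (if T \<le> N \<and> p N = x \<and> v = x + 1 then {N} else {})"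
    by (auto simp: less_Suc_eq)
  then show ?thesis unfolding crossings_def by (simp add: card_insert_if)
qed

lemma supermart_nonneg: "supermart T p n \<ge> 0"
  unfolding supermart_def using avoid_nonneg theta_gt_1 by simp

lemma supermart_le_1: "n \<le> T \<Longrightarrow> supermart T p n \<le> 1"
  unfolding supermart_def using crossings_eq_0 avoid_le_1 by auto

lemma supermart_extend:
  assumes "T \<le> N" "admissible_on T p N" "v = p N + 1 \<or> v = p N - 1"
  shows "supermart T (p(Suc N := v)) (Suc N)
           = theta ^ (crossings T p N + (if p N = x \<and> v = x + 1 then 1 else 0))
             * avoid v (D1 p N + Delta_increment \<alpha> (x + 1) (max (p N) v))
                 (D2 p N + Delta_increment \<alpha> (x + 2) (max (p N) v))"
  using assms unfolding supermart_def
  by (simp add: admissible_on_extend crossings_extend admissible_at_def D1_extend D2_extend avoid_def)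

lemma supermart_step:
  fixes p :: "nat \<Rightarrow> int" and N :: nat
  defines "D \<equiv> Delta \<alpha> p N (p N)"
  shows "up D * supermart T (p(Suc N := p N + 1)) (Suc N)
           + up (- D) * supermart T (p(Suc N := p N - 1)) (Suc N) \<le> supermart T p N"
proof -
  consider (early) "N < T" | (stopped) "T \<le> N" "\<not> admissible_on T p N" | (running) "T \<le> N" "admissible_on T p N"
    by linarith
  then show ?thesis
  proof cases
    case early
    then have "up D * supermart T (p(Suc N := p N + 1)) (Suc N) + up (- D) * supermart T (p(Suc N := p N - 1)) (Suc N)
        \<le> up D * 1 + up (- D) * 1"
      using supermart_le_1 right_prob_pos by (intro add_mono mult_left_mono) (auto simp: less_imp_le)
    then show ?thesis using early right_prob_add_neg[of \<beta> D] unfolding supermart_def by simp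
  next
    case stopped
    then show ?thesis unfolding supermart_def by (simp add: admissible_on_extend)
  next
    case running
    let ?k = "crossings T p N" and ?d = "D1 p N" and ?f = "D2 p N"
    define factor where "factor = (if p N = x then theta else 1)"
    define R where "R = avoid (p N + 1) (?d + Delta_increment \<alpha> (x + 1) (p N + 1))
      (?f + Delta_increment \<alpha> (x + 2) (p N + 1))"
    define L where "L = avoid (p N - 1) (?d + Delta_increment \<alpha> (x + 1) (p N))
      (?f + Delta_increment \<alpha> (x + 2) (p N))"
    have adm: "admissible (p N) ?d ?f" using running unfolding admissible_on_def admissible_at_def by auto
    have right: "supermart T (p(Suc N := p N + 1)) (Suc N) = theta ^ ?k * (factor * R)"
      using supermart_extend[OF running, of "p N + 1"] unfolding factor_def R_def by (simp add: power_add)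
    have left: "supermart T (p(Suc N := p N - 1)) (Suc N) = theta ^ ?k * L"
      using supermart_extend[OF running, of "p N - 1"] unfolding L_def by simp
    have neg: "up (- D) = 1 - up D" using right_prob_add_neg[of \<beta> D] by simp
    have "up D * supermart T (p(Suc N := p N + 1)) (Suc N) + up (- D) * supermart T (p(Suc N := p N - 1)) (Suc N)
        = theta ^ ?k * (up D * factor * R + (1 - up D) * L)"
      unfolding right left neg by (simp add: algebra_simps)
    also have "\<dots> \<le> theta ^ ?k * avoid (p N) ?d ?f"
      unfolding factor_def R_def L_def
      using theta_gt_1 right_prob_pos[of \<beta> D] right_prob_le_1[of \<beta> D]
      by (intro mult_left_mono avoid_superharmonic[OF adm]) (auto simp: D_def D1_def D2_def less_imp_le)
    also have "\<dots> = supermart T p N" using running unfolding supermart_def by simp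
    finally show ?thesis .
  qed
qed

lemma expectation_supermart_le_1: "(\<Sum>p\<in>nn_paths N. path_prob \<alpha> \<beta> p N * supermart T p N) \<le> 1"
proof (induction N)
  case 0
  then show ?case using supermart_le_1[of 0 T] by (simp add: nn_paths_0 path_prob_def)
next
  case (Suc N)
  have "(\<Sum>q\<in>nn_paths (Suc N). path_prob \<alpha> \<beta> q (Suc N) * supermart T q (Suc N))
      = (\<Sum>p\<in>nn_paths N. path_prob \<alpha> \<beta> p N
           * (up (Delta \<alpha> p N (p N)) * supermart T (p(Suc N := p N + 1)) (Suc N)
              + up (- Delta \<alpha> p N (p N)) * supermart T (p(Suc N := p N - 1)) (Suc N)))"
    unfolding sum_nn_paths_Suc path_prob_extend step_prob_right step_prob_left by (simp add: algebra_simps)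
  also have "\<dots> \<le> (\<Sum>p\<in>nn_paths N. path_prob \<alpha> \<beta> p N * supermart T p N)"
    using supermart_step path_prob_nonneg by (intro sum_mono mult_left_mono) auto
  finally show ?case using Suc by simp
qed

text \<open>Markov's inequality for the supermartingale, which is at least \<open>theta ^ m / 2\<close> on the event
  below.\<close>

lemma sum_path_prob_many_crossings_le:
  "(\<Sum>p\<in>nn_paths N \<inter> {p. admissible_on T p N \<and> m \<le> crossings T p N \<and> T \<le> N}. path_prob \<alpha> \<beta> p N)
     \<le> 2 / theta ^ m"
proof -
  let ?E = "{p. admissible_on T p N \<and> m \<le> crossings T p N \<and> T \<le> N}"
  have theta_m: "theta ^ m > 0" using theta_gt_1 by simp
  have bound: "1 \<le> 2 / theta ^ m * supermart T p N" if "p \<in> ?E" for p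
  proof -
    have "admissible_at p N" using that unfolding admissible_on_def by auto
    then have "1 / 2 \<le> avoid (p N) (D1 p N) (D2 p N)"
      unfolding admissible_at_def avoid_def using potential_le_half by simp
    moreover have "theta ^ m \<le> theta ^ crossings T p N" using that theta_gt_1 by (intro power_increasing) auto
    ultimately have "theta ^ m * (1 / 2) \<le> theta ^ crossings T p N * avoid (p N) (D1 p N) (D2 p N)"
      using theta_m by (intro mult_mono) auto
    then have "theta ^ m * (1 / 2) \<le> supermart T p N" unfolding supermart_def using that by simp
    then show ?thesis using theta_m by (simp add: field_simps)
  qed
  have "path_prob \<alpha> \<beta> p N \<le> 2 / theta ^ m * (path_prob \<alpha> \<beta> p N * supermart T p N)" if "p \<in> ?E" for p
    using mult_left_mono[OF bound[OF that] path_prob_nonneg[of \<alpha> \<beta> p N]] by (simp add: mult_ac)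
  then have "(\<Sum>p\<in>nn_paths N \<inter> ?E. path_prob \<alpha> \<beta> p N)
      \<le> (\<Sum>p\<in>nn_paths N \<inter> ?E. 2 / theta ^ m * (path_prob \<alpha> \<beta> p N * supermart T p N))"
    by (intro sum_mono) auto
  also have "\<dots> \<le> (\<Sum>p\<in>nn_paths N. 2 / theta ^ m * (path_prob \<alpha> \<beta> p N * supermart T p N))"
    using finite_nn_paths path_prob_nonneg supermart_nonneg theta_m
    by (intro sum_mono2) (auto intro!: mult_nonneg_nonneg)
  also have "\<dots> = 2 / theta ^ m * (\<Sum>p\<in>nn_paths N. path_prob \<alpha> \<beta> p N * supermart T p N)"
    by (simp add: sum_distrib_left)
  also have "\<dots> \<le> 2 / theta ^ m * 1"
    using expectation_supermart_le_1[of N T] theta_m by (intro mult_left_mono) auto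
  finally show ?thesis by simp
qed

section \<open>Eventual admissibility\<close>

definition event_times :: "(nat \<Rightarrow> int) \<Rightarrow> nat set" where
  "event_times p = {k. p k = x + 1 \<and> D1 p k \<le> - C \<and> D1 p k + D2 p k \<le> - C
                     \<or> p k = x + 2 \<and> D2 p k \<ge> C \<and> D1 p k + D2 p k \<ge> C}"

lemma admissible_at_iff:
  "admissible_at p k \<longleftrightarrow> x \<le> p k \<and> p k \<le> x + 3 \<and> k \<notin> event_times p
     \<and> (p k = x + 2 \<and> D1 p k + D2 p k \<le> - C - 1 \<longrightarrow> D1 p k > - C - 1)
     \<and> (p k = x + 1 \<and> D1 p k + D2 p k \<ge> C + 1 \<longrightarrow> D2 p k < C + 1)"
  unfolding admissible_at_def admissible_def event_times_def by auto

lemma D1_Suc: "nn_path p \<Longrightarrow> D1 p (Suc N) = D1 p N + Delta_increment \<alpha> (x + 1) (max (p N) (p (Suc N)))"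
  using D1_extend[of "p (Suc N)" p N] unfolding nn_path_def by simp

lemma D2_Suc: "nn_path p \<Longrightarrow> D2 p (Suc N) = D2 p N + Delta_increment \<alpha> (x + 2) (max (p N) (p (Suc N)))"
  using D2_extend[of "p (Suc N)" p N] unfolding nn_path_def by simp

text \<open>The clause of \<open>admissible\<close> at \<open>x + 2\<close> becomes true once \<open>x\<close> has been visited: in the
  window \<open>{x..x + 3}\<close> without events (a), the site \<open>x + 2\<close> with \<open>D1 + D2 \<le> - C - 1\<close> is reached
  either from \<open>x + 1\<close> (where \<open>D1 > - C\<close>) or through an excursion to \<open>x + 3\<close>, which raises
  \<open>D1\<close> by \<open>2 * \<alpha>\<close>.\<close>

lemma invariant_x2:
  assumes p: "nn_path p" and TA: "p TA = x"
    and confined: "\<And>k. TA \<le> k \<Longrightarrow> x \<le> p k \<and> p k \<le> x + 3"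
    and no_event: "\<And>k. TA \<le> k \<Longrightarrow> k \<notin> event_times p"
  shows "TA \<le> k \<Longrightarrow> p k = x + 2 \<Longrightarrow> D1 p k + D2 p k \<le> - C - 1 \<Longrightarrow> D1 p k > - C - 1"
proof (induction k rule: less_induct)
  case (less k)
  have step: "p (Suc j) = p j + 1 \<or> p (Suc j) = p j - 1" for j using p unfolding nn_path_def by blast
  obtain k1 where k1: "k = Suc k1" "TA \<le> k1" using less.prems(1,2) TA by (cases k) (auto simp: le_Suc_eq)
  have "p k1 = x + 1 \<or> p k1 = x + 3" using step[of k1] k1 less.prems(2) by auto
  then show ?case
  proof
    assume k1_x1: "p k1 = x + 1"
    have "D1 p k = D1 p k1 - 1" "D2 p k = D2 p k1 + 1"
      using D1_Suc[OF p, of k1] D2_Suc[OF p, of k1] k1 k1_x1 less.prems(2) by (simp_all add: Delta_increment_def)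
    moreover have "k1 \<notin> event_times p" using no_event k1 by simp
    ultimately show ?thesis using less.prems(3) k1_x1 C_pos unfolding event_times_def by auto
  next
    assume k1_x3: "p k1 = x + 3"
    obtain k2 where k2: "k1 = Suc k2" "TA \<le> k2" using k1 k1_x3 TA by (cases k1) (auto simp: le_Suc_eq)
    have k2_x2: "p k2 = x + 2" using step[of k2] confined[of k2] k2 k1_x3 by auto
    have "D1 p k = D1 p k2 + 2 * \<alpha>" "D2 p k = D2 p k2 - 2"
      using D1_Suc[OF p, of k1] D2_Suc[OF p, of k1] D1_Suc[OF p, of k2] D2_Suc[OF p, of k2]
        k1 k2 k1_x3 k2_x2 less.prems(2) by (simp_all add: Delta_increment_def)
    moreover have "D1 p k2 > - C - 1"
      using less.IH[of k2] k1 k2 k2_x2 less.prems(3) \<open>D1 p k = D1 p k2 + 2 * \<alpha>\<close> \<open>D2 p k = D2 p k2 - 2\<close>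
        alpha_gt_1 by simp
    ultimately show ?thesis using alpha_gt_1 by simp
  qed
qed

lemma invariant_x1:
  assumes p: "nn_path p" and TB: "p TB = x + 3"
    and confined: "\<And>k. TB \<le> k \<Longrightarrow> x \<le> p k \<and> p k \<le> x + 3"
    and no_event: "\<And>k. TB \<le> k \<Longrightarrow> k \<notin> event_times p"
  shows "TB \<le> k \<Longrightarrow> p k = x + 1 \<Longrightarrow> D1 p k + D2 p k \<ge> C + 1 \<Longrightarrow> D2 p k < C + 1"
proof (induction k rule: less_induct)
  case (less k)
  have step: "p (Suc j) = p j + 1 \<or> p (Suc j) = p j - 1" for j using p unfolding nn_path_def by blast
  obtain k1 where k1: "k = Suc k1" "TB \<le> k1" using less.prems(1,2) TB by (cases k) (auto simp: le_Suc_eq)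
  have "p k1 = x + 2 \<or> p k1 = x" using step[of k1] k1 less.prems(2) by auto
  then show ?case
  proof
    assume k1_x2: "p k1 = x + 2"
    have "D1 p k = D1 p k1 - 1" "D2 p k = D2 p k1 + 1"
      using D1_Suc[OF p, of k1] D2_Suc[OF p, of k1] k1 k1_x2 less.prems(2) by (simp_all add: Delta_increment_def)
    moreover have "k1 \<notin> event_times p" using no_event k1 by simp
    ultimately show ?thesis using less.prems(3) k1_x2 C_pos unfolding event_times_def by auto
  next
    assume k1_x: "p k1 = x"
    obtain k2 where k2: "k1 = Suc k2" "TB \<le> k2" using k1 k1_x TB by (cases k1) (auto simp: le_Suc_eq)
    have k2_x1: "p k2 = x + 1" using step[of k2] confined[of k2] k2 k1_x by auto
    have "D1 p k = D1 p k2 + 2" "D2 p k = D2 p k2 - 2 * \<alpha>"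
      using D1_Suc[OF p, of k1] D2_Suc[OF p, of k1] D1_Suc[OF p, of k2] D2_Suc[OF p, of k2]
        k1 k2 k1_x k2_x1 less.prems(2) by (simp_all add: Delta_increment_def)
    moreover have "D2 p k2 < C + 1"
      using less.IH[of k2] k1 k2 k2_x1 less.prems(3) \<open>D1 p k = D1 p k2 + 2\<close> \<open>D2 p k = D2 p k2 - 2 * \<alpha>\<close>
        alpha_gt_1 by simp
    ultimately show ?thesis using alpha_gt_1 by simp
  qed
qed

lemma crossings_unbounded:
  assumes p: "nn_path p" and visits: "infinite {k. p k = x}" and above: "\<And>k. T \<le> k \<Longrightarrow> x \<le> p k"
  shows "\<exists>N. T \<le> N \<and> m \<le> crossings T p N"
proof -
  let ?I = "{j. T \<le> j \<and> p j = x \<and> p (Suc j) = x + 1}"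
  have "infinite ?I"
    unfolding infinite_nat_iff_unbounded
  proof
    fix m0
    obtain n where n: "n > m0 + T" "p n = x" using visits unfolding infinite_nat_iff_unbounded by auto
    have "x \<le> p (Suc n)" using above[of "Suc n"] n by simp
    moreover have "p (Suc n) = x + 1 \<or> p (Suc n) = x - 1" using p n unfolding nn_path_def by auto
    ultimately show "\<exists>k>m0. k \<in> ?I" using n by (intro exI[of _ n]) auto
  qed
  then obtain n where n: "m \<le> card {k \<in> ?I. k < n}" using infinite_imp_card_initial_segment_ge by blast
  have "card {k \<in> ?I. k < n} \<le> crossings T p (max n T)"
    unfolding crossings_def by (intro card_mono) auto
  then show ?thesis using n by (intro exI[of _ "max n T"]) auto
qed

lemma eventually_admissible_with_crossings:
  assumes p: "nn_path p"
    and R: "{j. infinite {m. m \<ge> 1 \<and> p m = j}} = {x, x + 1, x + 2, x + 3}"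
    and events: "finite (event_times p)"
  shows "\<exists>T. (\<forall>N. admissible_on T p N) \<and> (\<forall>m. \<exists>N. T \<le> N \<and> m \<le> crossings T p N)"
proof -
  have visits: "infinite {m. p m = j} \<longleftrightarrow> j \<in> {x, x + 1, x + 2, x + 3}" for j
    using R infinite_Collect_ge_1_iff[of "\<lambda>m. p m = j"] by blast
  have unbounded: "\<exists>n>m. p n = j" if "j \<in> {x, x + 1, x + 2, x + 3}" for m j
    using visits[of j] that unfolding infinite_nat_iff_unbounded by auto
  obtain T0 where T0: "\<And>k. T0 \<le> k \<Longrightarrow> x \<le> p k \<and> p k \<le> x + 3"
    using nn_path_eventually_confined[OF p, of x "x + 3"] visits[of x] visits[of "x + 3"]
      visits[of "x - 1"] visits[of "x + 3 + 1"] by auto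
  obtain T1 where "event_times p \<subseteq> {..<T1}" using finite_nat_bounded[OF events] by blast
  then have T1: "\<And>k. T1 \<le> k \<Longrightarrow> k \<notin> event_times p" by auto
  obtain TA where TA: "TA > max T0 T1" "p TA = x" using unbounded[of x "max T0 T1"] by auto
  obtain TB where TB: "TB > max T0 T1" "p TB = x + 3" using unbounded[of "x + 3" "max T0 T1"] by auto
  have confined_TA: "\<And>k. TA \<le> k \<Longrightarrow> x \<le> p k \<and> p k \<le> x + 3"
    and no_event_TA: "\<And>k. TA \<le> k \<Longrightarrow> k \<notin> event_times p"
    and confined_TB: "\<And>k. TB \<le> k \<Longrightarrow> x \<le> p k \<and> p k \<le> x + 3"
    and no_event_TB: "\<And>k. TB \<le> k \<Longrightarrow> k \<notin> event_times p"
    using T0 T1 TA(1) TB(1) by auto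
  note inv2 = invariant_x2[OF p TA(2) confined_TA no_event_TA]
  note inv1 = invariant_x1[OF p TB(2) confined_TB no_event_TB]
  define T where "T = max TA TB"
  have "admissible_on T p N" for N
    unfolding admissible_on_def admissible_at_iff
  proof (intro allI impI)
    fix k assume "T \<le> k \<and> k \<le> N"
    then have "TA \<le> k" "TB \<le> k" unfolding T_def by auto
    then show "x \<le> p k \<and> p k \<le> x + 3 \<and> k \<notin> event_times p
       \<and> (p k = x + 2 \<and> D1 p k + D2 p k \<le> - C - 1 \<longrightarrow> D1 p k > - C - 1)
       \<and> (p k = x + 1 \<and> D1 p k + D2 p k \<ge> C + 1 \<longrightarrow> D2 p k < C + 1)"
      using confined_TA no_event_TA inv2 inv1 by blast
  qed
  moreover have "\<And>k. T \<le> k \<Longrightarrow> x \<le> p k" using confined_TA unfolding T_def by auto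
  then have "\<exists>N. T \<le> N \<and> m \<le> crossings T p N" for m
    using visits[of x] by (intro crossings_unbounded[OF p]) auto
  ultimately show ?thesis by blast
qed

end

locale repelling_walk = walk_potential \<alpha> \<beta> C x + walk_law M \<alpha> \<beta> X
  for \<alpha> \<beta> C :: real and x :: int and M :: "'a measure" and X :: "nat \<Rightarrow> 'a \<Rightarrow> int"
begin

definition many_crossings :: "nat \<Rightarrow> nat \<Rightarrow> nat \<Rightarrow> 'a set" where
  "many_crossings T m N =
     {\<omega> \<in> space M. (\<forall>N'. admissible_on T (traj \<omega>) N') \<and> T \<le> N \<and> m \<le> crossings T (traj \<omega>) N}"

definition trapped :: "nat \<Rightarrow> 'a set" where
  "trapped T = (\<Inter>m. \<Union>N. many_crossings T m N)"

lemma determined_upto_admissible_on: "determined_upto N {p. admissible_on T p N}"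
  unfolding determined_upto_def
proof (intro allI impI)
  fix p q :: "nat \<Rightarrow> int" assume "\<forall>i\<le>N. p i = q i"
  then have "admissible_on T p N = admissible_on T q N" by (intro admissible_on_cong) auto
  then show "p \<in> {p. admissible_on T p N} \<longleftrightarrow> q \<in> {p. admissible_on T p N}" by simp
qed

lemma determined_upto_crossings:
  "determined_upto N {p. admissible_on T p N \<and> m \<le> crossings T p N \<and> T \<le> N}"
  unfolding determined_upto_def
proof (intro allI impI)
  fix p q :: "nat \<Rightarrow> int" assume "\<forall>i\<le>N. p i = q i"
  then have "admissible_on T p N = admissible_on T q N" "crossings T p N = crossings T q N"
    by (intro admissible_on_cong crossings_cong; auto)+
  then show "p \<in> {p. admissible_on T p N \<and> m \<le> crossings T p N \<and> T \<le> N}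
      \<longleftrightarrow> q \<in> {p. admissible_on T p N \<and> m \<le> crossings T p N \<and> T \<le> N}" by simp
qed

lemma sets_many_crossings: "many_crossings T m N \<in> sets M"
proof -
  have "many_crossings T m N
      = (\<Inter>N'. {\<omega> \<in> space M. traj \<omega> \<in> {p. admissible_on T p N'}})
        \<inter> {\<omega> \<in> space M. traj \<omega> \<in> {p. admissible_on T p N \<and> m \<le> crossings T p N \<and> T \<le> N}}"
    unfolding many_crossings_def by blast
  also have "\<dots> \<in> sets M"
    using sets_traj_determined[OF determined_upto_admissible_on] sets_traj_determined[OF determined_upto_crossings]
    by (intro sets.Int sets.countable_INT') auto
  finally show ?thesis .
qed

lemma measure_many_crossings_le: "measure M (many_crossings T m N) \<le> 2 / theta ^ m"
proof -
  let ?A = "{p. admissible_on T p N \<and> m \<le> crossings T p N \<and> T \<le> N}"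
  have "measure M (many_crossings T m N) \<le> measure M {\<omega> \<in> space M. traj \<omega> \<in> ?A}"
    using sets_traj_determined[OF determined_upto_crossings] unfolding many_crossings_def
    by (intro finite_measure_mono) auto
  also have "\<dots> \<le> (\<Sum>p\<in>nn_paths N \<inter> ?A. path_prob \<alpha> \<beta> p N)"
    by (rule measure_traj_determined_le[OF determined_upto_crossings])
  also have "\<dots> \<le> 2 / theta ^ m" by (rule sum_path_prob_many_crossings_le)
  finally show ?thesis .
qed

lemma measure_UN_many_crossings_le: "measure M (\<Union>N. many_crossings T m N) \<le> 2 / theta ^ m"
proof -
  have "incseq (many_crossings T m)"
    unfolding incseq_def
  proof (intro allI impI subsetI)
    fix N N' \<omega> assume "N \<le> N'" "\<omega> \<in> many_crossings T m N"
    moreover have "crossings T (traj \<omega>) N \<le> crossings T (traj \<omega>) N'"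
      using \<open>N \<le> N'\<close> by (rule crossings_mono)
    ultimately show "\<omega> \<in> many_crossings T m N'" unfolding many_crossings_def by auto
  qed
  then have "(\<lambda>N. measure M (many_crossings T m N)) \<longlonglongrightarrow> measure M (\<Union>N. many_crossings T m N)"
    using sets_many_crossings by (intro finite_Lim_measure_incseq) auto
  then show ?thesis using measure_many_crossings_le by (intro LIMSEQ_le_const2) auto
qed

lemma trapped_null: "trapped T \<in> null_sets M"
proof -
  have sets: "trapped T \<in> sets M"
    unfolding trapped_def using sets_many_crossings by (intro sets.countable_INT' sets.countable_UN') auto
  have "measure M (trapped T) \<le> 2 / theta ^ m" for m
  proof -
    have "measure M (trapped T) \<le> measure M (\<Union>N. many_crossings T m N)"
      unfolding trapped_def using sets_many_crossings by (intro finite_measure_mono sets.countable_UN') auto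
    then show ?thesis using measure_UN_many_crossings_le[of T m] by linarith
  qed
  moreover have "(\<lambda>m. 2 / theta ^ m) \<longlonglongrightarrow> 0" using theta_gt_1 by (rule LIMSEQ_divide_realpow_zero)
  ultimately have "measure M (trapped T) \<le> 0" by (intro LIMSEQ_le_const) auto
  then show ?thesis using sets measure_nonneg[of M "trapped T"] by (simp add: null_setsI emeasure_eq_measure)
qed

lemma AE_infinite_event_times:
  "AE \<omega> in M. R' X \<omega> = {x, x + 1, x + 2, x + 3} \<longrightarrow> infinite (event_times (traj \<omega>))"
proof -
  have "AE \<omega> in M. \<omega> \<notin> (\<Union>T. trapped T)" using trapped_null by (intro AE_not_in) auto
  with AE_nn_path AE_space show ?thesis
  proof eventually_elim
    case (elim \<omega>)
    show ?case
    proof (intro impI notI)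
      assume R: "R' X \<omega> = {x, x + 1, x + 2, x + 3}" and "finite (event_times (traj \<omega>))"
      moreover have "{j. infinite {m. m \<ge> 1 \<and> traj \<omega> m = j}} = {x, x + 1, x + 2, x + 3}"
        using R unfolding R'_def traj_def by simp
      ultimately obtain T where
        "\<forall>N. admissible_on T (traj \<omega>) N" "\<forall>m. \<exists>N. T \<le> N \<and> m \<le> crossings T (traj \<omega>) N"
        using eventually_admissible_with_crossings elim(1) by blast
      then have "\<omega> \<in> trapped T" unfolding trapped_def many_crossings_def using elim(2) by blast
      then show False using elim(3) by blast
    qed
  qed
qed

end

theorem mainTheorem14:
  fixes M :: "'a measure" and X :: "nat \<Rightarrow> 'a \<Rightarrow> int"
    and \<alpha> \<beta> C :: real and x :: int
  assumes "\<alpha> > 1" and "\<beta> > 0" and "C > 0"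
    and "is_walk M \<alpha> \<beta> X"
  shows "AE \<omega> in M. R' X \<omega> = {x, x+1, x+2, x+3} \<longrightarrow>
           infinite {k. (X k \<omega> = x + 1 \<and> Delta \<alpha> (\<lambda>i. X i \<omega>) k (x + 1) \<le> - C
                          \<and> Delta \<alpha> (\<lambda>i. X i \<omega>) k (x + 1) + Delta \<alpha> (\<lambda>i. X i \<omega>) k (x + 2) \<le> - C)
                      \<or> (X k \<omega> = x + 2 \<and> Delta \<alpha> (\<lambda>i. X i \<omega>) k (x + 2) \<ge> C
                          \<and> Delta \<alpha> (\<lambda>i. X i \<omega>) k (x + 1) + Delta \<alpha> (\<lambda>i. X i \<omega>) k (x + 2) \<ge> C)}"
proof -
  interpret repelling_walk \<alpha> \<beta> C x M X
    using assms unfolding repelling_walk_def walk_potential_def walk_law_def walk_law_axioms_def is_walk_def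
    by auto
  show ?thesis
    using AE_infinite_event_times unfolding event_times_def D1_def D2_def traj_def .
qed

end
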